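(* Let $\mathfrak d=\mathfrak n^-\oplus\mathfrak k\oplus\mathfrak h\oplus\mathfrak n^+$ be the Lie algebra described in the context, built from a finite dimensional simple Lie algebra $\mathfrak g$ and a skew symmetric bilinear form $u$ on $\mathfrak h^*$. (a) Let $\mathrm{rad}(u)=\{\lambda\in\mathfrak h^*\mid u(\lambda,\mu)=0 \text{ for all }\mu\in\mathfrak h^*\}$ and let $\mathfrak l$ be the subspace of $\mathfrak d$ spanned by all $h_\lambda-k_\lambda$ with $\lambda\in\mathrm{rad}(u)$. Then $\mathfrak l$ is a solvable ideal of $\mathfrak d$. In particular, if $u=0$, then $\mathfrak l$ is the maximal solvable ideal of $\mathfrak d$ and $\mathfrak d/\mathfrak l$ is isomorphic to $\mathfrak g$. (b) Let $\mathfrak m$ be the subspace of $\mathfrak d$ spanned by all root vectors $x_\alpha\in\mathfrak n^-\oplus\mathfrak n^+$ and all elements $h_\lambda+k_\lambda$, $\lambda\in\mathfrak h^*$. Then $\mathfrak m$ is an ideal of $\mathfrak d$ isomorphic to $\mathfrak g$.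
   Context: Let $C=(a_{ij})_{n\times n}$ be an indecomposable symmetrizable generalized Cartan matrix of finite type, and $D=\mathrm{diag}(d_1,\dots,d_n)$ with positive integers $d_i$ such that $DC$ is symmetric positive definite. Let $\mathfrak g$ be the finite dimensional simple complex Lie algebra (bracket $[\cdot,\cdot]_{\mathfrak g}$) associated to $C$, $\mathfrak h$ a Cartan subalgebra with simple roots $\alpha_1,\dots,\alpha_n$, and $h_i\in\mathfrak h$ with $\alpha_j(h_i)=a_{ij}$; $\mathfrak g$ is generated by $h_i,x_{\pm\alpha_i}$ with $[h_i,x_{\pm\alpha_j}]_{\mathfrak g}=\pm a_{ij}x_{\pm\alpha_j}$, $[x_{\alpha_i},x_{-\alpha_j}]_{\mathfrak g}=\delta_{ij}h_i$ and the Serre relations. Let $\mathfrak n^+$ (resp. $\mathfrak n^-$) be the span of root vectors with positive (resp. negative) roots, $\mathfrak n=\mathfrak n^-\oplus\mathfrak n^+$; $x_\alpha$ always denotes a root vector of root $\alpha$. Let $(\cdot|\cdot)$ be the symmetric bilinear form on $\mathfrak h^*$ with $(\alpha_i|\alpha_j)=d_ia_{ij}$; for $\lambda\in\mathfrak h^*$ let $h_\lambda\in\mathfrak h$ be defined by $\alpha_i(h_\lambda)=(\alpha_i|\lambda)$ for all $i$. This gives a form on $\mathfrak h$, $(h_\lambda|h_\mu)=(\lambda|\mu)=\lambda(h_\mu)$, extended to the nondegenerate $\mathfrak g$-invariant symmetric form on $\mathfrak g$ with $(h_i|h_j)=d_j^{-1}a_{ij}$, $(h|x_\alpha)=0$,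 $(x_\alpha|x_\beta)=0$ if $\alpha+\beta\neq0$, $(x_{\alpha_i}|x_{-\alpha_j})=d_i^{-1}\delta_{ij}$. Let $u=(u_{ij})$ be a skew symmetric complex $n\times n$ matrix, giving $u(\lambda,\mu)=\sum_{i,j}u_{ij}\lambda(h_i)\mu(h_j)$ on $\mathfrak h^*$; let $\Phi:\mathfrak h^*\to\mathfrak h^*$ be the linear map with $u(\lambda,\mu)=(\Phi\lambda|\mu)$, and $\Phi_\pm=\Phi\pm I$. Let $\mathfrak k$ be a vector space with a linear isomorphism $\varphi:\mathfrak h\to\mathfrak k$, and $k_\lambda=\varphi(h_\lambda)$. Let $\mathfrak g'=\mathfrak n^-\oplus\mathfrak k\oplus\mathfrak n^+$ be the Lie algebra (isomorphic to $\mathfrak g$) with bracket $[k_\lambda,k_\mu]_{\mathfrak g'}=0$, $[k_\lambda,x_\alpha]_{\mathfrak g'}=(\alpha|\lambda)x_\alpha$, $[x_\alpha,x_\beta]_{\mathfrak g'}=[x_\alpha,x_\beta]_{\mathfrak g}$ for $\alpha\neq-\beta$, $[x_\alpha,x_{-\alpha}]_{\mathfrak g'}=\varphi([x_\alpha,x_{-\alpha}]_{\mathfrak g})$. Then $\mathfrak d=\mathfrak n^-\oplus\mathfrak k\oplus\mathfrak h\oplus\mathfrak n^+$ is the Lie algebra with bracket: $[h_\lambda,h_\mu]=[h_\lambda,k_\mu]=[k_\lambda,k_\mu]=0$, $[h_\lambda,x_\alpha]=-(\Phi_-\lambda|\alpha)x_\alpha$, $[k_\lambda,x_\alpha]=(\Phi_+\lambda|\alpha)x_\alpha$,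 $[x_\alpha,x_\beta]=\tfrac12([x_\alpha,x_\beta]_{\mathfrak g}+[x_\alpha,x_\beta]_{\mathfrak g'})$ for all $\lambda,\mu\in\mathfrak h^*$ and root vectors $x_\alpha,x_\beta\in\mathfrak n$. *)

theory Defs
  imports Complex_Main "HOL-Library.Product_Plus"
begin

definition lin_span :: "(complex \<Rightarrow> 'v::ab_group_add \<Rightarrow> 'v) \<Rightarrow> 'v set \<Rightarrow> 'v set" where
  "lin_span sc S = \<Inter>{W. S \<subseteq> W \<and> 0 \<in> W \<and> (\<forall>x\<in>W. \<forall>y\<in>W. x + y \<in> W)
                        \<and> (\<forall>c. \<forall>x\<in>W. sc c x \<in> W)}"

definition is_subspace :: "(complex \<Rightarrow> 'v::ab_group_add \<Rightarrow> 'v) \<Rightarrow> 'v set \<Rightarrow> bool" where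
  "is_subspace sc W \<longleftrightarrow> 0 \<in> W \<and> (\<forall>x\<in>W. \<forall>y\<in>W. x + y \<in> W) \<and> (\<forall>c. \<forall>x\<in>W. sc c x \<in> W)"

definition lie_algebra :: "'v::ab_group_add set \<Rightarrow> (complex \<Rightarrow> 'v \<Rightarrow> 'v) \<Rightarrow> ('v \<Rightarrow> 'v \<Rightarrow> 'v) \<Rightarrow> bool" where
  "lie_algebra V sc br \<longleftrightarrow> is_subspace sc V
     \<and> (\<forall>x\<in>V. \<forall>y\<in>V. br x y \<in> V)
     \<and> (\<forall>x\<in>V. \<forall>y\<in>V. \<forall>z\<in>V. br (x + y) z = br x z + br y z \<and> br x (y + z) = br x y + br x z)
     \<and> (\<forall>c. \<forall>x\<in>V. \<forall>y\<in>V. br (sc c x) y = sc c (br x y) \<and> br x (sc c y) = sc c (br x y))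
     \<and> (\<forall>x\<in>V. br x x = 0)
     \<and> (\<forall>x\<in>V. \<forall>y\<in>V. \<forall>z\<in>V. br x (br y z) + br y (br z x) + br z (br x y) = 0)"

definition is_ideal :: "'v::ab_group_add set \<Rightarrow> (complex \<Rightarrow> 'v \<Rightarrow> 'v) \<Rightarrow> ('v \<Rightarrow> 'v \<Rightarrow> 'v) \<Rightarrow> 'v set \<Rightarrow> bool" where
  "is_ideal V sc br I \<longleftrightarrow> I \<subseteq> V \<and> is_subspace sc I \<and> (\<forall>x\<in>V. \<forall>y\<in>I. br x y \<in> I)"

fun derived :: "(complex \<Rightarrow> 'v::ab_group_add \<Rightarrow> 'v) \<Rightarrow> ('v \<Rightarrow> 'v \<Rightarrow> 'v) \<Rightarrow> 'v set \<Rightarrow> nat \<Rightarrow> 'v set" where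
  "derived sc br L 0 = L"
| "derived sc br L (Suc k) =
     lin_span sc {br x y | x y. x \<in> derived sc br L k \<and> y \<in> derived sc br L k}"

definition solvable :: "(complex \<Rightarrow> 'v::ab_group_add \<Rightarrow> 'v) \<Rightarrow> ('v \<Rightarrow> 'v \<Rightarrow> 'v) \<Rightarrow> 'v set \<Rightarrow> bool" where
  "solvable sc br L \<longleftrightarrow> (\<exists>k. derived sc br L k = {0})"

definition max_solvable_ideal :: "'v::ab_group_add set \<Rightarrow> (complex \<Rightarrow> 'v \<Rightarrow> 'v) \<Rightarrow> ('v \<Rightarrow> 'v \<Rightarrow> 'v) \<Rightarrow> 'v set \<Rightarrow> bool" where
  "max_solvable_ideal V sc br I \<longleftrightarrow> is_ideal V sc br I \<and> solvable sc br I
     \<and> (\<forall>J. is_ideal V sc br J \<and> solvable sc br J \<longrightarrow> J \<subseteq> I)"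

definition simple_lie :: "(complex \<Rightarrow> 'v::ab_group_add \<Rightarrow> 'v) \<Rightarrow> ('v \<Rightarrow> 'v \<Rightarrow> 'v) \<Rightarrow> bool" where
  "simple_lie sc br \<longleftrightarrow> lie_algebra UNIV sc br \<and> (\<exists>x y. br x y \<noteq> 0)
     \<and> (\<forall>I. is_ideal UNIV sc br I \<longrightarrow> I = {0} \<or> I = UNIV)"

definition lie_generated :: "(complex \<Rightarrow> 'v::ab_group_add \<Rightarrow> 'v) \<Rightarrow> ('v \<Rightarrow> 'v \<Rightarrow> 'v) \<Rightarrow> 'v set \<Rightarrow> 'v set" where
  "lie_generated sc br S = \<Inter>{W. S \<subseteq> W \<and> is_subspace sc W \<and> (\<forall>x\<in>W. \<forall>y\<in>W. br x y \<in> W)}"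

definition lie_iso :: "'a set \<Rightarrow> ('a \<Rightarrow> 'a \<Rightarrow> 'a) \<Rightarrow> (complex \<Rightarrow> 'a \<Rightarrow> 'a) \<Rightarrow> ('a \<Rightarrow> 'a \<Rightarrow> 'a)
     \<Rightarrow> 'b set \<Rightarrow> ('b \<Rightarrow> 'b \<Rightarrow> 'b) \<Rightarrow> (complex \<Rightarrow> 'b \<Rightarrow> 'b) \<Rightarrow> ('b \<Rightarrow> 'b \<Rightarrow> 'b) \<Rightarrow> ('a \<Rightarrow> 'b) \<Rightarrow> bool" where
  "lie_iso A addA scA brA B addB scB brB f \<longleftrightarrow> bij_betw f A B
     \<and> (\<forall>x\<in>A. \<forall>y\<in>A. f (addA x y) = addB (f x) (f y) \<and> f (brA x y) = brB (f x) (f y))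
     \<and> (\<forall>c. \<forall>x\<in>A. f (scA c x) = scB c (f x))"

definition coset :: "'v::ab_group_add set \<Rightarrow> 'v \<Rightarrow> 'v set" where
  "coset I x = {x + i | i. i \<in> I}"

definition quot_carrier :: "'v::ab_group_add set \<Rightarrow> 'v set \<Rightarrow> 'v set set" where
  "quot_carrier V I = coset I ` V"

definition quot_add :: "'v::ab_group_add set \<Rightarrow> 'v set \<Rightarrow> 'v set \<Rightarrow> 'v set" where
  "quot_add I A B = {a + b + i | a b i. a \<in> A \<and> b \<in> B \<and> i \<in> I}"

definition quot_scale :: "(complex \<Rightarrow> 'v::ab_group_add \<Rightarrow> 'v) \<Rightarrow> 'v set \<Rightarrow> complex \<Rightarrow> 'v set \<Rightarrow> 'v set" where
  "quot_scale sc I c A = {sc c a + i | a i. a \<in> A \<and> i \<in> I}"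

definition quot_br :: "('v::ab_group_add \<Rightarrow> 'v \<Rightarrow> 'v) \<Rightarrow> 'v set \<Rightarrow> 'v set \<Rightarrow> 'v set \<Rightarrow> 'v set" where
  "quot_br br I A B = {br a b + i | a b i. a \<in> A \<and> b \<in> B \<and> i \<in> I}"

text \<open>\<open>C = (a_ij)\<close> for \<open>i,j < n\<close>, \<open>D = diag(d_0,...,d_(n-1))\<close>.\<close>
definition gcm_finite_type_sym :: "nat \<Rightarrow> (nat \<Rightarrow> nat \<Rightarrow> int) \<Rightarrow> (nat \<Rightarrow> nat) \<Rightarrow> bool" where
  "gcm_finite_type_sym n C d \<longleftrightarrow> n \<ge> 1
     \<and> (\<forall>i<n. C i i = 2)
     \<and> (\<forall>i<n. \<forall>j<n. i \<noteq> j \<longrightarrow> C i j \<le> 0)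
     \<and> (\<forall>i<n. \<forall>j<n. C i j = 0 \<longleftrightarrow> C j i = 0)
     \<and> (\<forall>I. I \<subseteq> {..<n} \<and> I \<noteq> {} \<and> I \<noteq> {..<n} \<longrightarrow> (\<exists>i\<in>I. \<exists>j\<in>{..<n} - I. C i j \<noteq> 0))
     \<and> (\<forall>i<n. d i > 0)
     \<and> (\<forall>i<n. \<forall>j<n. int (d i) * C i j = int (d j) * C j i)
     \<and> (\<forall>x::nat \<Rightarrow> real. (\<exists>i<n. x i \<noteq> 0) \<longrightarrow>
          (\<Sum>i<n. \<Sum>j<n. x i * real (d i) * real_of_int (C i j) * x j) > 0)"

text \<open>\<open>g\<close> is the whole type \<open>'g\<close> with scalar multiplication \<open>sc\<close> and bracket \<open>br\<close>;
  \<open>hh i = h_i\<close>, \<open>xp i = x_(\<alpha>_i)\<close>, \<open>xm i = x_(-\<alpha>_i)\<close>.\<close>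
definition chevalley_serre :: "nat \<Rightarrow> (nat \<Rightarrow> nat \<Rightarrow> int) \<Rightarrow> (complex \<Rightarrow> 'g::ab_group_add \<Rightarrow> 'g) \<Rightarrow> ('g \<Rightarrow> 'g \<Rightarrow> 'g)
     \<Rightarrow> (nat \<Rightarrow> 'g) \<Rightarrow> (nat \<Rightarrow> 'g) \<Rightarrow> (nat \<Rightarrow> 'g) \<Rightarrow> bool" where
  "chevalley_serre n C sc br hh xp xm \<longleftrightarrow>
     lie_generated sc br ({hh i | i. i < n} \<union> {xp i | i. i < n} \<union> {xm i | i. i < n}) = UNIV
   \<and> (\<forall>i<n. \<forall>j<n. br (hh i) (hh j) = 0)
   \<and> (\<forall>i<n. \<forall>j<n. br (hh i) (xp j) = sc (of_int (C i j)) (xp j))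
   \<and> (\<forall>i<n. \<forall>j<n. br (hh i) (xm j) = sc (- of_int (C i j)) (xm j))
   \<and> (\<forall>i<n. \<forall>j<n. br (xp i) (xm j) = (if i = j then hh i else 0))
   \<and> (\<forall>i<n. \<forall>j<n. i \<noteq> j \<longrightarrow> (br (xp i) ^^ nat (1 - C i j)) (xp j) = 0)
   \<and> (\<forall>i<n. \<forall>j<n. i \<noteq> j \<longrightarrow> (br (xm i) ^^ nat (1 - C i j)) (xm j) = 0)"

definition hset :: "nat \<Rightarrow> (complex \<Rightarrow> 'g::ab_group_add \<Rightarrow> 'g) \<Rightarrow> (nat \<Rightarrow> 'g) \<Rightarrow> 'g set" where
  "hset n sc hh = lin_span sc {hh i | i. i < n}"

text \<open>\<open>h^*\<close>: linear functionals on \<open>h\<close>, normalised to vanish outside \<open>h\<close>.\<close>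
definition hdual :: "nat \<Rightarrow> (complex \<Rightarrow> 'g::ab_group_add \<Rightarrow> 'g) \<Rightarrow> (nat \<Rightarrow> 'g) \<Rightarrow> ('g \<Rightarrow> complex) set" where
  "hdual n sc hh = {lam. (\<forall>x\<in>hset n sc hh. \<forall>y\<in>hset n sc hh. lam (x + y) = lam x + lam y)
       \<and> (\<forall>c. \<forall>x\<in>hset n sc hh. lam (sc c x) = c * lam x)
       \<and> (\<forall>x. x \<notin> hset n sc hh \<longrightarrow> lam x = 0)}"

definition simple_root :: "nat \<Rightarrow> (nat \<Rightarrow> nat \<Rightarrow> int) \<Rightarrow> (complex \<Rightarrow> 'g::ab_group_add \<Rightarrow> 'g) \<Rightarrow> (nat \<Rightarrow> 'g) \<Rightarrow> nat \<Rightarrow> ('g \<Rightarrow> complex)" where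
  "simple_root n C sc hh i = (THE lam. lam \<in> hdual n sc hh \<and> (\<forall>j<n. lam (hh j) = of_int (C j i)))"

definition rootspace :: "nat \<Rightarrow> (complex \<Rightarrow> 'g::ab_group_add \<Rightarrow> 'g) \<Rightarrow> ('g \<Rightarrow> 'g \<Rightarrow> 'g) \<Rightarrow> (nat \<Rightarrow> 'g) \<Rightarrow> ('g \<Rightarrow> complex) \<Rightarrow> 'g set" where
  "rootspace n sc br hh \<alpha> = {x. \<forall>H\<in>hset n sc hh. br H x = sc (\<alpha> H) x}"

definition is_root :: "nat \<Rightarrow> (complex \<Rightarrow> 'g::ab_group_add \<Rightarrow> 'g) \<Rightarrow> ('g \<Rightarrow> 'g \<Rightarrow> 'g) \<Rightarrow> (nat \<Rightarrow> 'g) \<Rightarrow> ('g \<Rightarrow> complex) \<Rightarrow> bool" where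
  "is_root n sc br hh \<alpha> \<longleftrightarrow> \<alpha> \<in> hdual n sc hh \<and> \<alpha> \<noteq> (\<lambda>_. 0) \<and> rootspace n sc br hh \<alpha> \<noteq> {0}"

definition pos_root :: "nat \<Rightarrow> (nat \<Rightarrow> nat \<Rightarrow> int) \<Rightarrow> (complex \<Rightarrow> 'g::ab_group_add \<Rightarrow> 'g) \<Rightarrow> ('g \<Rightarrow> 'g \<Rightarrow> 'g) \<Rightarrow> (nat \<Rightarrow> 'g) \<Rightarrow> ('g \<Rightarrow> complex) \<Rightarrow> bool" where
  "pos_root n C sc br hh \<alpha> \<longleftrightarrow> is_root n sc br hh \<alpha>
     \<and> (\<exists>c::nat \<Rightarrow> nat. \<forall>H\<in>hset n sc hh. \<alpha> H = (\<Sum>i<n. of_nat (c i) * simple_root n C sc hh i H))"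

definition neg_root :: "nat \<Rightarrow> (nat \<Rightarrow> nat \<Rightarrow> int) \<Rightarrow> (complex \<Rightarrow> 'g::ab_group_add \<Rightarrow> 'g) \<Rightarrow> ('g \<Rightarrow> 'g \<Rightarrow> 'g) \<Rightarrow> (nat \<Rightarrow> 'g) \<Rightarrow> ('g \<Rightarrow> complex) \<Rightarrow> bool" where
  "neg_root n C sc br hh \<alpha> \<longleftrightarrow> is_root n sc br hh \<alpha> \<and> pos_root n C sc br hh (\<lambda>x. - \<alpha> x)"

definition nplus where
  "nplus n C sc br hh = lin_span sc (\<Union>{rootspace n sc br hh \<alpha> | \<alpha>. pos_root n C sc br hh \<alpha>})"

definition nminus where
  "nminus n C sc br hh = lin_span sc (\<Union>{rootspace n sc br hh \<alpha> | \<alpha>. neg_root n C sc br hh \<alpha>})"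

definition nset where
  "nset n C sc br hh = {a + b | a b. a \<in> nminus n C sc br hh \<and> b \<in> nplus n C sc br hh}"

text \<open>\<open>h_\<mu>\<close>: the element of \<open>h\<close> with \<open>\<alpha>_i(h_\<mu>) = (\<alpha>_i|\<mu>) = d_i \<mu>(h_i)\<close>.\<close>
definition hvec :: "nat \<Rightarrow> (nat \<Rightarrow> nat \<Rightarrow> int) \<Rightarrow> (nat \<Rightarrow> nat) \<Rightarrow> (complex \<Rightarrow> 'g::ab_group_add \<Rightarrow> 'g) \<Rightarrow> (nat \<Rightarrow> 'g) \<Rightarrow> ('g \<Rightarrow> complex) \<Rightarrow> 'g" where
  "hvec n C d sc hh \<mu> = (THE H. H \<in> hset n sc hh
      \<and> (\<forall>i<n. simple_root n C sc hh i H = of_nat (d i) * \<mu> (hh i)))"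

text \<open>The form \<open>(lam|\<mu>) = lam(h_\<mu>)\<close> on \<open>h^*\<close> (so that \<open>(\<alpha>_i|\<alpha>_j) = d_i a_ij\<close>).\<close>
definition hform where
  "hform n C d sc hh lam \<mu> = lam (hvec n C d sc hh \<mu>)"

definition uform :: "nat \<Rightarrow> (nat \<Rightarrow> nat \<Rightarrow> complex) \<Rightarrow> (nat \<Rightarrow> 'g) \<Rightarrow> ('g \<Rightarrow> complex) \<Rightarrow> ('g \<Rightarrow> complex) \<Rightarrow> complex" where
  "uform n u hh lam \<mu> = (\<Sum>i<n. \<Sum>j<n. u i j * lam (hh i) * \<mu> (hh j))"

definition Phi where
  "Phi n C d u sc hh lam = (THE \<psi>. \<psi> \<in> hdual n sc hh
      \<and> (\<forall>\<mu>\<in>hdual n sc hh. hform n C d sc hh \<psi> \<mu> = uform n u hh lam \<mu>))"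

definition Phi_plus where
  "Phi_plus n C d u sc hh lam = (\<lambda>x. Phi n C d u sc hh lam x + lam x)"

definition Phi_minus where
  "Phi_minus n C d u sc hh lam = (\<lambda>x. Phi n C d u sc hh lam x - lam x)"

definition rad_u where
  "rad_u n u sc hh = {lam\<in>hdual n sc hh. \<forall>\<mu>\<in>hdual n sc hh. uform n u hh lam \<mu> = 0}"

text \<open>Elements of \<open>d = n^- \<oplus> k \<oplus> h \<oplus> n^+\<close> are represented as triples \<open>(y, H, K)\<close> with
  \<open>y \<in> n\<close>, \<open>H \<in> h\<close>, \<open>K \<in> h\<close>; the third component represents \<open>k = \<phi>(h)\<close>, i.e. \<open>(0,0,K)\<close> stands
  for \<open>\<phi>(K)\<close>.\<close>
definition dset where
  "dset n C sc br hh = nset n C sc br hh \<times> hset n sc hh \<times> hset n sc hh"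

definition dscale :: "(complex \<Rightarrow> 'g \<Rightarrow> 'g) \<Rightarrow> complex \<Rightarrow> 'g \<times> 'g \<times> 'g \<Rightarrow> 'g \<times> 'g \<times> 'g" where
  "dscale sc c v = (sc c (fst v), sc c (fst (snd v)), sc c (snd (snd v)))"

definition hD where "hD n C d sc hh lam = (0, hvec n C d sc hh lam, 0)"
definition kD where "kD n C d sc hh lam = (0, 0, hvec n C d sc hh lam)"
definition xD :: "'g::zero \<Rightarrow> 'g \<times> 'g \<times> 'g" where "xD x = (x, 0, 0)"

definition d_bracket where
  "d_bracket n C d u sc br hh brd \<longleftrightarrow>
     lie_algebra (dset n C sc br hh) (dscale sc) brd
   \<and> (\<forall>lam\<in>hdual n sc hh. \<forall>\<mu>\<in>hdual n sc hh.
        brd (hD n C d sc hh lam) (hD n C d sc hh \<mu>) = 0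
      \<and> brd (hD n C d sc hh lam) (kD n C d sc hh \<mu>) = 0
      \<and> brd (kD n C d sc hh lam) (kD n C d sc hh \<mu>) = 0)
   \<and> (\<forall>lam\<in>hdual n sc hh. \<forall>\<alpha>. is_root n sc br hh \<alpha> \<longrightarrow> (\<forall>x\<in>rootspace n sc br hh \<alpha>.
        brd (hD n C d sc hh lam) (xD x)
          = dscale sc (- hform n C d sc hh (Phi_minus n C d u sc hh lam) \<alpha>) (xD x)
      \<and> brd (kD n C d sc hh lam) (xD x)
          = dscale sc (hform n C d sc hh (Phi_plus n C d u sc hh lam) \<alpha>) (xD x)))
   \<and> (\<forall>\<alpha> \<beta>. is_root n sc br hh \<alpha> \<and> is_root n sc br hh \<beta> \<and> (\<lambda>x. \<alpha> x + \<beta> x) \<noteq> (\<lambda>_. 0) \<longrightarrow>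
        (\<forall>x\<in>rootspace n sc br hh \<alpha>. \<forall>y\<in>rootspace n sc br hh \<beta>. brd (xD x) (xD y) = xD (br x y)))
   \<and> (\<forall>\<alpha>. is_root n sc br hh \<alpha> \<longrightarrow>
        (\<forall>x\<in>rootspace n sc br hh \<alpha>. \<forall>y\<in>rootspace n sc br hh (\<lambda>z. - \<alpha> z).
           brd (xD x) (xD y) = (0, sc (1/2) (br x y), sc (1/2) (br x y))))"

end

theory Submission
  imports Defs "Jordan_Normal_Form.Determinant"
begin

text \<open>
  Both parts rest on the linear map \<open>proj (y, H, K) = y + H + K\<close> from \<open>\<dd>\<close> onto \<open>\<gg>\<close>. First one
  shows \<open>\<gg> = \<nn> \<oplus> \<hh>\<close> with every root a positive or negative one, using independence of root
  spaces and the fact that \<open>\<nn> + \<hh>\<close> is a subalgebra containing the Chevalley generators; this makes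
  \<open>\<dd>\<close> the span of the \<open>x\<^sub>\<alpha>\<close>, \<open>h\<^sub>\<lambda>\<close> and \<open>k\<^sub>\<lambda>\<close>, so bracket identities need only be checked on these
  generators. For \<open>\<lambda> \<in> rad(u)\<close> we have \<open>\<Phi>\<lambda> = 0\<close>, so \<open>h\<^sub>\<lambda>\<close> and \<open>k\<^sub>\<lambda>\<close> act on \<open>x\<^sub>\<alpha>\<close> by the same scalar and
  \<open>h\<^sub>\<lambda> - k\<^sub>\<lambda>\<close> is central: \<open>\<ll>\<close> is an abelian ideal. On \<open>\<mm>\<close> the \<open>\<Phi>\<close>-terms cancel in \<open>h\<^sub>\<lambda> + k\<^sub>\<lambda>\<close>,
  so \<open>proj\<close> restricted to \<open>\<mm>\<close> is a bracket-preserving bijection onto \<open>\<gg>\<close>. If \<open>u = 0\<close>, \<open>proj\<close> is a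
  homomorphism on all of \<open>\<dd>\<close> with kernel \<open>\<ll>\<close>; the image of a solvable ideal is a solvable ideal
  of the simple algebra \<open>\<gg>\<close>, hence zero, so the ideal lies in \<open>\<ll>\<close>.
\<close>

lemma cartan_real_kernel:
  fixes x :: "nat \<Rightarrow> real"
  assumes cartan: "gcm_finite_type_sym n C d"
    and kernel: "\<forall>i<n. (\<Sum>j<n. real_of_int (C i j) * x j) = 0"
  shows "\<forall>j<n. x j = 0"
proof (rule ccontr)
  have pd: "\<forall>x::nat \<Rightarrow> real. (\<exists>i<n. x i \<noteq> 0) \<longrightarrow>
          (\<Sum>i<n. \<Sum>j<n. x i * real (d i) * real_of_int (C i j) * x j) > 0"
    using cartan unfolding gcm_finite_type_sym_def by blast
  assume "\<not> ?thesis"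
  then have "(\<Sum>i<n. \<Sum>j<n. x i * real (d i) * real_of_int (C i j) * x j) > 0" using pd by auto
  moreover have "(\<Sum>i<n. \<Sum>j<n. x i * real (d i) * real_of_int (C i j) * x j)
      = (\<Sum>i<n. x i * real (d i) * (\<Sum>j<n. real_of_int (C i j) * x j))"
    by (simp add: sum_distrib_left algebra_simps)
  ultimately show False using kernel by simp
qed

lemma cartan_transpose_kernel:
  assumes cartan: "gcm_finite_type_sym n C d"
    and kernel: "\<forall>i<n. (\<Sum>j<n. c j * complex_of_int (C j i)) = 0"
  shows "\<forall>j<n. c j = 0"
proof -
  have d_pos: "\<forall>i<n. d i > 0" and sym: "\<forall>i<n. \<forall>j<n. int (d i) * C i j = int (d j) * C j i"
    using cartan unfolding gcm_finite_type_sym_def by auto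
  \<comment> \<open>With \<open>c = D z\<close>, symmetry of \<open>DC\<close> turns \<open>C\<^sup>T c = 0\<close> into \<open>C z = 0\<close>.\<close>
  define z where "z j = c j / of_nat (d j)" for j
  have cz: "c j = z j * of_nat (d j)" if "j < n" for j
    using d_pos that by (auto simp: z_def)
  have row: "(\<Sum>j<n. complex_of_int (C i j) * z j) = 0" if i: "i < n" for i
  proof -
    have "0 = (\<Sum>j<n. c j * complex_of_int (C j i))" using kernel i by auto
    also have "\<dots> = (\<Sum>j<n. z j * complex_of_int (int (d j) * C j i))"
      by (rule sum.cong) (auto simp: cz)
    also have "\<dots> = (\<Sum>j<n. z j * complex_of_int (int (d i) * C i j))"
      by (rule sum.cong) (use sym i in auto)
    also have "\<dots> = of_nat (d i) * (\<Sum>j<n. complex_of_int (C i j) * z j)"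
      by (simp add: sum_distrib_left algebra_simps)
    finally show ?thesis using d_pos i by auto
  qed
  have "\<forall>j<n. Re (z j) = 0"
  proof (rule cartan_real_kernel[OF cartan], intro allI impI)
    fix i assume "i < n"
    have "Re (\<Sum>j<n. complex_of_int (C i j) * z j) = 0" using row[OF \<open>i<n\<close>] by simp
    then show "(\<Sum>j<n. real_of_int (C i j) * Re (z j)) = 0" by (simp add: Re_sum)
  qed
  moreover have "\<forall>j<n. Im (z j) = 0"
  proof (rule cartan_real_kernel[OF cartan], intro allI impI)
    fix i assume "i < n"
    have "Im (\<Sum>j<n. complex_of_int (C i j) * z j) = 0" using row[OF \<open>i<n\<close>] by simp
    then show "(\<Sum>j<n. real_of_int (C i j) * Im (z j)) = 0" by (simp add: Im_sum)
  qed
  ultimately show ?thesis using cz by (auto simp: complex_eq_iff)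
qed

lemma cartan_transpose_solvable:
  assumes cartan: "gcm_finite_type_sym n C d"
  shows "\<exists>c. \<forall>i<n. (\<Sum>j<n. c j * complex_of_int (C j i)) = b i"
proof -
  define A :: "complex mat" where "A = mat n n (\<lambda>(i,j). complex_of_int (C j i))"
  have A: "A \<in> carrier_mat n n" by (simp add: A_def)
  have Av: "(A *\<^sub>v v) $ i = (\<Sum>j<n. v $ j * complex_of_int (C j i))" if "v \<in> carrier_vec n" "i < n" for v i
    using that by (auto simp: A_def scalar_prod_def row_def mult.commute lessThan_atLeast0 intro!: sum.cong)
  have "det A \<noteq> 0"
  proof
    assume "det A = 0"
    then obtain v where v: "v \<in> carrier_vec n" "v \<noteq> 0\<^sub>v n" "A *\<^sub>v v = 0\<^sub>v n"
      using det_0_iff_vec_prod_zero_field[OF A] by auto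
    have "\<forall>i<n. (\<Sum>j<n. v $ j * complex_of_int (C j i)) = 0"
      using v(3) Av[OF v(1)] by (metis index_zero_vec(1))
    from cartan_transpose_kernel[OF cartan this] have "v = 0\<^sub>v n" using v(1) by (intro eq_vecI) auto
    with v(2) show False by simp
  qed
  from det_non_zero_imp_unit[OF A this, of "()"]
  obtain B where B: "B \<in> carrier_mat n n" "A * B = 1\<^sub>m n"
    unfolding Units_def ring_mat_def by auto
  define c where "c = B *\<^sub>v vec n b"
  have c: "c \<in> carrier_vec n" using B by (simp add: c_def)
  have "A *\<^sub>v c = vec n b"
    unfolding c_def using A B by (simp add: assoc_mult_mat_vec[symmetric, of _ n n _ n])
  then show ?thesis using Av[OF c] by (intro exI[of _ "\<lambda>j. c $ j"]) auto
qed

lemma lin_span_eq_span: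
  assumes "vector_space sc" shows "lin_span sc S = module.span sc S"
proof -
  interpret vector_space sc by fact
  show ?thesis
    unfolding lin_span_def span_def hull_def subspace_def by (rule arg_cong[where f=Inter]) auto
qed

lemma is_subspace_iff_subspace:
  assumes "vector_space sc" shows "is_subspace sc S = module.subspace sc S"
proof -
  interpret vector_space sc by fact
  show ?thesis unfolding is_subspace_def subspace_def by auto
qed

lemma linear_on_span_closed:
  assumes vs1: "vector_space s1" and vs2: "vector_space s2"
    and V: "module.subspace s1 V" and AV: "A \<subseteq> V" and S: "module.subspace s2 S"
    and add: "\<And>x y. x \<in> V \<Longrightarrow> y \<in> V \<Longrightarrow> g (x + y) = g x + g y"
    and scale: "\<And>c x. x \<in> V \<Longrightarrow> g (s1 c x) = s2 c (g x)"
    and gen: "\<And>a. a \<in> A \<Longrightarrow> g a \<in> S"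
    and x: "x \<in> module.span s1 A"
  shows "g x \<in> S"
proof -
  interpret v1: vector_space s1 by fact
  interpret v2: vector_space s2 by fact
  have "0 \<in> V" using V v1.subspace_0 by blast
  then have "g 0 = 0" using add[of 0 0] by simp
  then have "v1.subspace {x\<in>V. g x \<in> S}"
    using V S add scale v1.subspace_0 v2.subspace_0 v1.subspace_add v2.subspace_add
      v1.subspace_scale v2.subspace_scale
    unfolding v1.subspace_def by auto
  moreover have "A \<subseteq> {x\<in>V. g x \<in> S}" using AV gen by auto
  ultimately have "v1.span A \<subseteq> {x\<in>V. g x \<in> S}" by (simp add: v1.span_minimal)
  then show ?thesis using x by auto
qed

lemma bilin_span_closed:
  assumes vs1: "vector_space s1" and vs2: "vector_space s2"
    and V: "module.subspace s1 V" and AV: "A \<subseteq> V" and BV: "B \<subseteq> V"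
    and S: "module.subspace s2 S"
    and addl: "\<And>x y z. x \<in> V \<Longrightarrow> y \<in> V \<Longrightarrow> z \<in> V \<Longrightarrow> f (x + y) z = f x z + f y z"
    and addr: "\<And>x y z. x \<in> V \<Longrightarrow> y \<in> V \<Longrightarrow> z \<in> V \<Longrightarrow> f x (y + z) = f x y + f x z"
    and scl: "\<And>c x y. x \<in> V \<Longrightarrow> y \<in> V \<Longrightarrow> f (s1 c x) y = s2 c (f x y)"
    and scr: "\<And>c x y. x \<in> V \<Longrightarrow> y \<in> V \<Longrightarrow> f x (s1 c y) = s2 c (f x y)"
    and gen: "\<And>a b. a \<in> A \<Longrightarrow> b \<in> B \<Longrightarrow> f a b \<in> S"
    and x: "x \<in> module.span s1 A" and y: "y \<in> module.span s1 B"
  shows "f x y \<in> S"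
proof -
  interpret v1: vector_space s1 by fact
  have xV: "x \<in> V" using v1.span_minimal[OF AV V] x by blast
  have "f x b \<in> S" if "b \<in> B" for b
    using linear_on_span_closed[OF vs1 vs2 V AV S, where g="\<lambda>x. f x b"] addl scl gen x that BV by blast
  then show ?thesis
    using linear_on_span_closed[OF vs1 vs2 V BV S, where g="f x"] addr scr xV y by blast
qed

lemma vector_space_dscale: assumes "vector_space sc" shows "vector_space (dscale sc)"
proof -
  interpret vector_space sc by fact
  show ?thesis unfolding vector_space_def dscale_def
    by (auto simp: scale_right_distrib scale_left_distrib)
qed

locale lie_double = vs: vector_space sc
  for sc :: "complex \<Rightarrow> 'g::ab_group_add \<Rightarrow> 'g" +
  fixes n :: nat and C :: "nat \<Rightarrow> nat \<Rightarrow> int" and d :: "nat \<Rightarrow> nat" and u :: "nat \<Rightarrow> nat \<Rightarrow> complex"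
    and br :: "'g \<Rightarrow> 'g \<Rightarrow> 'g" and hh xp xm :: "nat \<Rightarrow> 'g"
    and brd :: "'g \<times> 'g \<times> 'g \<Rightarrow> 'g \<times> 'g \<times> 'g \<Rightarrow> 'g \<times> 'g \<times> 'g"
  assumes cartan: "gcm_finite_type_sym n C d"
    and simple: "simple_lie sc br"
    and gens: "chevalley_serre n C sc br hh xp xm"
    and d_brd: "d_bracket n C d u sc br hh brd"
begin

sublocale dv: vector_space "dscale sc" by (rule vector_space_dscale) unfold_locales

lemma lin_span_eq: "lin_span sc S = vs.span S"
  using lin_span_eq_span vs.vector_space_axioms .

lemma dlin_span_eq: "lin_span (dscale sc) S = dv.span S"
  using lin_span_eq_span dv.vector_space_axioms .

lemma is_subspace_eq: "is_subspace sc S = vs.subspace S"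
  using is_subspace_iff_subspace vs.vector_space_axioms .

lemma dis_subspace_eq: "is_subspace (dscale sc) S = dv.subspace S"
  using is_subspace_iff_subspace dv.vector_space_axioms .

lemma br_nontrivial: "\<exists>x y. br x y \<noteq> 0"
  using simple[unfolded simple_lie_def, THEN conjunct2, THEN conjunct1] .

lemma lie_algebra_g: "lie_algebra UNIV sc br" using simple by (simp add: simple_lie_def)

lemma br_addl: "br (x + y) z = br x z + br y z" using lie_algebra_g unfolding lie_algebra_def by blast
lemma br_addr: "br x (y + z) = br x y + br x z" using lie_algebra_g unfolding lie_algebra_def by blast
lemma br_scl: "br (sc c x) y = sc c (br x y)" using lie_algebra_g unfolding lie_algebra_def by blast
lemma br_scr: "br x (sc c y) = sc c (br x y)" using lie_algebra_g unfolding lie_algebra_def by blast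
lemma br_alt: "br x x = 0" using lie_algebra_g unfolding lie_algebra_def by blast
lemma br_jac: "br x (br y z) + br y (br z x) + br z (br x y) = 0" using lie_algebra_g unfolding lie_algebra_def by blast

lemma linear_br_left: "Vector_Spaces.linear sc sc (\<lambda>x. br x y)"
  unfolding Vector_Spaces.linear_iff using br_addl br_scl vs.vector_space_axioms by auto
lemma linear_br_right: "Vector_Spaces.linear sc sc (br x)"
  unfolding Vector_Spaces.linear_iff using br_addr br_scr vs.vector_space_axioms by auto

lemma module_hom_br_left: "module_hom sc sc (\<lambda>x. br x y)" using linear_br_left module_hom_iff_linear by blast
lemma module_hom_br_right: "module_hom sc sc (br x)" using linear_br_right module_hom_iff_linear by blast

lemma br_0l[simp]: "br 0 y = 0" using module_hom.zero[OF module_hom_br_left] by simp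
lemma br_0r[simp]: "br x 0 = 0" using module_hom.zero[OF module_hom_br_right] by simp
lemma br_neg_r: "br x (- y) = - br x y" using module_hom.neg[OF module_hom_br_right] by simp
lemma br_sum_l: "br (sum f A) y = (\<Sum>a\<in>A. br (f a) y)" using module_hom.sum[OF module_hom_br_left] by simp
lemma br_sum_r: "br x (sum f A) = (\<Sum>a\<in>A. br x (f a))" using module_hom.sum[OF module_hom_br_right] by simp

lemma br_anti: "br x y = - br y x"
proof -
  have "0 = br (x + y) (x + y)" by (simp add: br_alt)
  also have "\<dots> = (br x x + br y x) + (br x y + br y y)" by (simp only: br_addl br_addr)
  finally have "br x y + br y x = 0" by (simp add: br_alt add.commute)
  then show ?thesis by (metis add.commute neg_eq_iff_add_eq_0)
qed

section \<open>The Cartan subalgebra \<open>\<hh>\<close> and its dual\<close>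

abbreviation "\<hh> \<equiv> hset n sc hh"
abbreviation "\<hh>' \<equiv> hdual n sc hh"
abbreviation "rootsp \<equiv> rootspace n sc br hh"
abbreviation "isroot \<equiv> is_root n sc br hh"
abbreviation "\<alpha> \<equiv> simple_root n C sc hh"
abbreviation "h\<^sub>g \<equiv> hvec n C d sc hh"

lemmas gens_facts = gens[unfolded chevalley_serre_def]
lemmas cartan_facts = cartan[unfolded gcm_finite_type_sym_def]

lemma generators_generate: "lie_generated sc br ({hh i | i. i < n} \<union> {xp i | i. i < n} \<union> {xm i | i. i < n}) = UNIV"
  using gens_facts by (rule conjunct1)
lemma hh_hh: "i < n \<Longrightarrow> j < n \<Longrightarrow> br (hh i) (hh j) = 0"
  using gens_facts[THEN conjunct2, THEN conjunct1] by blast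
lemma hh_xp: "i < n \<Longrightarrow> j < n \<Longrightarrow> br (hh i) (xp j) = sc (of_int (C i j)) (xp j)"
  using gens_facts[THEN conjunct2, THEN conjunct2, THEN conjunct1] by blast
lemma hh_xm: "i < n \<Longrightarrow> j < n \<Longrightarrow> br (hh i) (xm j) = sc (- of_int (C i j)) (xm j)"
  using gens_facts[THEN conjunct2, THEN conjunct2, THEN conjunct2, THEN conjunct1] by blast
lemma xp_xm: "i < n \<Longrightarrow> j < n \<Longrightarrow> br (xp i) (xm j) = (if i = j then hh i else 0)"
  using gens_facts[THEN conjunct2, THEN conjunct2, THEN conjunct2, THEN conjunct2, THEN conjunct1] by blast

lemma cartan_diag: "i < n \<Longrightarrow> C i i = 2" using cartan_facts[THEN conjunct2, THEN conjunct1] by blast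
lemma cartan_indecomposable: "I \<subseteq> {..<n} \<Longrightarrow> I \<noteq> {} \<Longrightarrow> I \<noteq> {..<n} \<Longrightarrow> (\<exists>i\<in>I. \<exists>j\<in>{..<n} - I. C i j \<noteq> 0)"
  using cartan_facts[THEN conjunct2, THEN conjunct2, THEN conjunct2, THEN conjunct2, THEN conjunct1] by blast
lemma d_pos: "i < n \<Longrightarrow> d i > 0"
  using cartan_facts[THEN conjunct2, THEN conjunct2, THEN conjunct2, THEN conjunct2, THEN conjunct2, THEN conjunct1] by blast
lemma cartan_symmetrizable: "i < n \<Longrightarrow> j < n \<Longrightarrow> int (d i) * C i j = int (d j) * C j i"
  using cartan_facts[THEN conjunct2, THEN conjunct2, THEN conjunct2, THEN conjunct2, THEN conjunct2, THEN conjunct2, THEN conjunct1] by blast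

lemma hset_span: "\<hh> = vs.span {hh i | i. i < n}"
  unfolding hset_def lin_span_eq ..

lemma hset_subspace: "vs.subspace \<hh>" unfolding hset_span by simp

lemma hh_hset: "i < n \<Longrightarrow> hh i \<in> \<hh>" unfolding hset_span by (rule vs.span_base) auto

lemma scale_hh_as_sum: "i < n \<Longrightarrow> sc c (hh i) = (\<Sum>j<n. sc (if j = i then c else 0) (hh j))"
  by (simp add: if_distrib[of "\<lambda>c. sc c _"] cong: if_cong)

lemma hset_eq: "\<hh> = {\<Sum>j<n. sc (c j) (hh j) | c. True}"
proof
  show "\<hh> \<subseteq> {\<Sum>j<n. sc (c j) (hh j) | c. True}"
  proof
    fix x assume "x \<in> \<hh>"
    then show "x \<in> {\<Sum>j<n. sc (c j) (hh j) | c. True}" unfolding hset_span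
    proof (induction rule: vs.span_induct_alt)
      case base
      show ?case by (intro CollectI exI[of _ "\<lambda>_. 0"]) simp
    next
      case (step c h y)
      then obtain i b where i: "i < n" "h = hh i" and b: "y = (\<Sum>j<n. sc (b j) (hh j))" by blast
      then have "sc c h + y = (\<Sum>j<n. sc ((if j = i then c else 0) + b j) (hh j))"
        by (simp add: scale_hh_as_sum vs.scale_left_distrib sum.distrib)
      then show ?case by (intro CollectI exI[of _ "\<lambda>j. (if j = i then c else 0) + b j"]) simp
    qed
  qed
  show "{\<Sum>j<n. sc (c j) (hh j) | c. True} \<subseteq> \<hh>"
    using hh_hset hset_subspace by (auto intro!: vs.subspace_sum vs.subspace_scale)
qed

lemma hset_abelian: assumes "H \<in> \<hh>" "H' \<in> \<hh>" shows "br H H' = 0"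
proof -
  have "br H H' \<in> {0}"
  proof (rule bilin_span_closed[OF vs.vector_space_axioms vs.vector_space_axioms vs.subspace_UNIV
      subset_UNIV subset_UNIV vs.subspace_single_0, where f=br and A="{hh i | i. i < n}" and B="{hh i | i. i < n}"])
    show "br a b \<in> {0}" if "a \<in> {hh i | i. i < n}" "b \<in> {hh i | i. i < n}" for a b
      using that hh_hh by auto
  qed (use assms in \<open>auto simp: br_addl br_addr br_scl br_scr hset_span\<close>)
  then show ?thesis by simp
qed

lemma generators_not_all_zero: "\<not> (\<forall>i<n. hh i = 0 \<and> xp i = 0 \<and> xm i = 0)"
proof
  assume "\<forall>i<n. hh i = 0 \<and> xp i = 0 \<and> xm i = 0"
  then have "{hh i | i. i < n} \<union> {xp i | i. i < n} \<union> {xm i | i. i < n} \<subseteq> {0}" by auto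
  moreover have "is_subspace sc {0}" by (simp add: is_subspace_eq)
  ultimately have "lie_generated sc br ({hh i | i. i < n} \<union> {xp i | i. i < n} \<union> {xm i | i. i < n}) \<subseteq> {0}"
    unfolding lie_generated_def by (intro Inter_lower) auto
  then have "UNIV \<subseteq> {0::'g}" using generators_generate by simp
  then show False using br_nontrivial by blast
qed

lemma xp_zero_propagates:
  assumes "j < n" "k < n" "C j k \<noteq> 0" "xp j = 0" shows "xp k = 0"
proof -
  have "hh j = 0" using xp_xm[OF assms(1) assms(1)] assms(4) by simp
  then have "sc (of_int (C j k)) (xp k) = 0" using hh_xp[OF assms(1,2)] by simp
  then show ?thesis using assms(3) by simp
qed

lemma xp_nonzero: assumes i: "i < n" shows "xp i \<noteq> 0"
proof
  assume xi: "xp i = 0"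
  define I where "I = {j. j < n \<and> xp j = 0}"
  have "I = {..<n}"
  proof (rule ccontr)
    assume "I \<noteq> {..<n}"
    moreover have "I \<subseteq> {..<n}" "I \<noteq> {}" using i xi by (auto simp: I_def)
    ultimately obtain j k where "j \<in> I" "k \<in> {..<n} - I" "C j k \<noteq> 0" using cartan_indecomposable[of I] by blast
    then show False using xp_zero_propagates[of j k] by (auto simp: I_def)
  qed
  then have xp0: "xp j = 0" if "j < n" for j using that by (auto simp: I_def)
  have hh0: "hh j = 0" if "j < n" for j using xp_xm[OF that that] xp0[OF that] by simp
  have "xm j = 0" if "j < n" for j
  proof -
    have "sc (- of_int (C j j)) (xm j) = 0" using hh_xm[OF that that] hh0[OF that] by simp
    then show ?thesis using cartan_diag[OF that] by simp
  qed
  then show False using generators_not_all_zero xp0 hh0 by blast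
qed

lemma br_hsum_xp: "i < n \<Longrightarrow> br (\<Sum>j<n. sc (c j) (hh j)) (xp i) = sc (\<Sum>j<n. c j * of_int (C j i)) (xp i)"
  by (simp add: br_sum_l br_scl hh_xp vs.scale_sum_left)

lemma br_hsum_xm: "i < n \<Longrightarrow> br (\<Sum>j<n. sc (c j) (hh j)) (xm i) = sc (- (\<Sum>j<n. c j * of_int (C j i))) (xm i)"
  by (simp add: br_sum_l br_scl hh_xm vs.scale_sum_left flip: sum_negf)

lemma hh_independent: assumes "(\<Sum>j<n. sc (c j) (hh j)) = 0" shows "\<forall>j<n. c j = 0"
proof (rule cartan_transpose_kernel[OF cartan], intro allI impI)
  fix i assume i: "i < n"
  have "sc (\<Sum>j<n. c j * of_int (C j i)) (xp i) = 0"
    using br_hsum_xp[OF i, of c] assms by simp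
  then show "(\<Sum>j<n. c j * complex_of_int (C j i)) = 0" using xp_nonzero[OF i] by simp
qed

lemma hh_coeff_unique: assumes "(\<Sum>j<n. sc (a j) (hh j)) = (\<Sum>j<n. sc (b j) (hh j))"
  shows "\<forall>j<n. a j = b j"
proof -
  have "(\<Sum>j<n. sc (a j - b j) (hh j)) = 0"
    using assms by (simp add: vs.scale_left_diff_distrib sum_subtractf)
  from hh_independent[OF this] show ?thesis by simp
qed

definition coord :: "'g \<Rightarrow> nat \<Rightarrow> complex" where
  "coord x = (SOME c. x = (\<Sum>j<n. sc (c j) (hh j)))"

lemma coord_eq: assumes "x \<in> \<hh>" shows "x = (\<Sum>j<n. sc (coord x j) (hh j))"
proof -
  from assms have "\<exists>c. x = (\<Sum>j<n. sc (c j) (hh j))" unfolding hset_eq by auto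
  then show ?thesis unfolding coord_def by (rule someI_ex)
qed

lemma coord_sum: "j < n \<Longrightarrow> coord (\<Sum>j<n. sc (c j) (hh j)) j = c j"
proof -
  assume j: "j < n"
  have "(\<Sum>j<n. sc (c j) (hh j)) \<in> \<hh>" unfolding hset_eq by blast
  from hh_coeff_unique[OF coord_eq[OF this, symmetric]] show ?thesis using j by blast
qed

definition dual_of :: "(nat \<Rightarrow> complex) \<Rightarrow> 'g \<Rightarrow> complex" where
  "dual_of v x = (if x \<in> \<hh> then (\<Sum>j<n. coord x j * v j) else 0)"

lemma dual_of_sum: "dual_of v (\<Sum>j<n. sc (c j) (hh j)) = (\<Sum>j<n. c j * v j)"
proof -
  have "(\<Sum>j<n. sc (c j) (hh j)) \<in> \<hh>" unfolding hset_eq by blast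
  then show ?thesis unfolding dual_of_def by (simp add: coord_sum)
qed

lemma hset_elim: assumes "x \<in> \<hh>" obtains c where "x = (\<Sum>j<n. sc (c j) (hh j))"
  using assms unfolding hset_eq by blast

lemma dual_of_hdual: "dual_of v \<in> \<hh>'"
proof -
  have "dual_of v (x + y) = dual_of v x + dual_of v y" if xy: "x \<in> \<hh>" "y \<in> \<hh>" for x y
  proof -
    obtain a where a: "x = (\<Sum>j<n. sc (a j) (hh j))" using hset_elim[OF xy(1)] by blast
    obtain b where b: "y = (\<Sum>j<n. sc (b j) (hh j))" using hset_elim[OF xy(2)] by blast
    have xy: "x + y = (\<Sum>j<n. sc (a j + b j) (hh j))" using a b by (simp add: sum.distrib vs.scale_left_distrib)
    have "dual_of v (x + y) = (\<Sum>j<n. (a j + b j) * v j)" unfolding xy dual_of_sum ..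
    also have "\<dots> = dual_of v x + dual_of v y" unfolding a b dual_of_sum by (simp add: sum.distrib algebra_simps)
    finally show ?thesis .
  qed
  moreover have "dual_of v (sc c x) = c * dual_of v x" if xh: "x \<in> \<hh>" for c x
  proof -
    obtain a where a: "x = (\<Sum>j<n. sc (a j) (hh j))" using hset_elim[OF xh] by blast
    have cx: "sc c x = (\<Sum>j<n. sc (c * a j) (hh j))" using a by (simp add: vs.scale_sum_right)
    have "dual_of v (sc c x) = (\<Sum>j<n. (c * a j) * v j)" unfolding cx dual_of_sum ..
    also have "\<dots> = c * dual_of v x" unfolding a dual_of_sum by (simp add: sum_distrib_left algebra_simps)
    finally show ?thesis .
  qed
  moreover have "dual_of v x = 0" if "x \<notin> \<hh>" for x using that by (simp add: dual_of_def)
  ultimately show ?thesis unfolding hdual_def by blast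
qed

lemma dual_of_hh: assumes "i < n" shows "dual_of v (hh i) = v i"
proof -
  have "dual_of v (hh i) = dual_of v (\<Sum>j<n. sc (if j = i then 1 else 0) (hh j))"
    using scale_hh_as_sum[OF assms, of 1] by simp
  also have "\<dots> = (\<Sum>j<n. (if j = i then 1 else 0) * v j)" by (rule dual_of_sum)
  also have "\<dots> = v i" using assms by (simp add: if_distrib[of "\<lambda>c. c * _"] cong: if_cong)
  finally show ?thesis .
qed

lemma hdual_add: "lam \<in> \<hh>' \<Longrightarrow> x \<in> \<hh> \<Longrightarrow> y \<in> \<hh> \<Longrightarrow> lam (x + y) = lam x + lam y"
  unfolding hdual_def by blast
lemma hdual_scale: "lam \<in> \<hh>' \<Longrightarrow> x \<in> \<hh> \<Longrightarrow> lam (sc c x) = c * lam x"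
  unfolding hdual_def by blast
lemma hdual_out: "lam \<in> \<hh>' \<Longrightarrow> x \<notin> \<hh> \<Longrightarrow> lam x = 0"
  unfolding hdual_def by blast

lemma hdual_sum_finite: assumes lam: "lam \<in> \<hh>'" shows "finite A \<Longrightarrow> (\<forall>j\<in>A. f j \<in> \<hh>) \<Longrightarrow> lam (sum f A) = (\<Sum>j\<in>A. lam (f j))"
proof (induction A rule: finite_induct)
  case empty
  have "lam 0 = lam (0 + 0)" by simp
  also have "\<dots> = lam 0 + lam 0" using hdual_add[OF lam] hset_subspace vs.subspace_0 by blast
  finally show ?case by simp
next
  case (insert a A)
  have "sum f A \<in> \<hh>" using insert hset_subspace by (auto intro: vs.subspace_sum)
  then show ?case using insert hdual_add[OF lam, of "f a" "sum f A"] by auto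
qed

lemma hdual_sum: "lam \<in> \<hh>' \<Longrightarrow> lam (\<Sum>j<n. sc (c j) (hh j)) = (\<Sum>j<n. c j * lam (hh j))"
  by (subst hdual_sum_finite) (auto intro!: sum.cong hdual_scale hh_hset vs.subspace_scale[OF hset_subspace])

lemma hdual_ext: assumes "lam \<in> \<hh>'" "mu \<in> \<hh>'" "\<forall>i<n. lam (hh i) = mu (hh i)" shows "lam = mu"
proof
  fix x show "lam x = mu x"
  proof (cases "x \<in> \<hh>")
    case True
    then obtain c where "x = (\<Sum>j<n. sc (c j) (hh j))" by (rule hset_elim)
    then show ?thesis using assms by (simp add: hdual_sum)
  next
    case False then show ?thesis using assms hdual_out by metis
  qed
qed

lemma zero_hdual: "(\<lambda>_. 0) \<in> \<hh>'" unfolding hdual_def by simp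

lemma hdual_neg: "lam \<in> \<hh>' \<Longrightarrow> (\<lambda>x. - lam x) \<in> \<hh>'" unfolding hdual_def by auto
lemma hdual_plus: "lam \<in> \<hh>' \<Longrightarrow> mu \<in> \<hh>' \<Longrightarrow> (\<lambda>x. lam x + mu x) \<in> \<hh>'"
  unfolding hdual_def by (auto simp: algebra_simps)

lemma sroot_eq: "\<alpha> i = dual_of (\<lambda>j. of_int (C j i))"
  unfolding simple_root_def
proof (rule the_equality)
  show "dual_of (\<lambda>j. of_int (C j i)) \<in> \<hh>' \<and> (\<forall>j<n. dual_of (\<lambda>j. of_int (C j i)) (hh j) = of_int (C j i))"
    by (simp add: dual_of_hdual dual_of_hh)
  show "lam = dual_of (\<lambda>j. complex_of_int (C j i))" if "lam \<in> \<hh>' \<and> (\<forall>j<n. lam (hh j) = complex_of_int (C j i))" for lam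
    using that by (intro hdual_ext) (auto simp: dual_of_hdual dual_of_hh)
qed

lemma sroot_hdual: "\<alpha> i \<in> \<hh>'" by (simp add: sroot_eq dual_of_hdual)
lemma sroot_hh: "j < n \<Longrightarrow> \<alpha> i (hh j) = of_int (C j i)" by (simp add: sroot_eq dual_of_hh)
lemma sroot_sum: "\<alpha> i (\<Sum>j<n. sc (c j) (hh j)) = (\<Sum>j<n. c j * of_int (C j i))" by (simp add: sroot_eq dual_of_sum)

lemma sroot_inj: assumes "H \<in> \<hh>" "H' \<in> \<hh>" "\<forall>i<n. \<alpha> i H = \<alpha> i H'" shows "H = H'"
proof -
  obtain a where a: "H = (\<Sum>j<n. sc (a j) (hh j))" using hset_elim[OF assms(1)] by blast
  obtain b where b: "H' = (\<Sum>j<n. sc (b j) (hh j))" using hset_elim[OF assms(2)] by blast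
  have "\<forall>i<n. (\<Sum>j<n. (a j - b j) * complex_of_int (C j i)) = 0"
  proof (intro allI impI)
    fix i assume "i < n"
    then have e: "(\<Sum>j<n. a j * complex_of_int (C j i)) = (\<Sum>j<n. b j * complex_of_int (C j i))"
      using assms(3) unfolding a b sroot_sum by blast
    have "(\<Sum>j<n. (a j - b j) * complex_of_int (C j i))
       = (\<Sum>j<n. a j * complex_of_int (C j i)) - (\<Sum>j<n. b j * complex_of_int (C j i))"
      by (simp only: left_diff_distrib sum_subtractf)
    then show "(\<Sum>j<n. (a j - b j) * complex_of_int (C j i)) = 0" using e by simp
  qed
  from cartan_transpose_kernel[OF cartan this] have "\<forall>j<n. a j = b j" by simp
  then show ?thesis unfolding a b by (intro sum.cong) auto
qed

lemma hvec_ex: assumes lam: "lam \<in> \<hh>'" shows "\<exists>H. H \<in> \<hh> \<and> (\<forall>i<n. \<alpha> i H = of_nat (d i) * lam (hh i))"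
proof -
  obtain c where c: "\<forall>i<n. (\<Sum>j<n. c j * complex_of_int (C j i)) = of_nat (d i) * lam (hh i)"
    using cartan_transpose_solvable[OF cartan, of "\<lambda>i. of_nat (d i) * lam (hh i)"] by blast
  have "(\<Sum>j<n. sc (c j) (hh j)) \<in> \<hh>" unfolding hset_eq by blast
  then show ?thesis using c by (intro exI[of _ "\<Sum>j<n. sc (c j) (hh j)"]) (simp add: sroot_sum)
qed

lemma hvec_prop: assumes lam: "lam \<in> \<hh>'"
  shows "h\<^sub>g lam \<in> \<hh> \<and> (\<forall>i<n. \<alpha> i (h\<^sub>g lam) = of_nat (d i) * lam (hh i))"
proof -
  have "\<exists>!H. H \<in> \<hh> \<and> (\<forall>i<n. \<alpha> i H = of_nat (d i) * lam (hh i))"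
  proof (rule ex_ex1I)
    show "\<exists>H. H \<in> \<hh> \<and> (\<forall>i<n. \<alpha> i H = of_nat (d i) * lam (hh i))" by (rule hvec_ex[OF lam])
    show "H = H'" if "H \<in> \<hh> \<and> (\<forall>i<n. \<alpha> i H = of_nat (d i) * lam (hh i))"
      "H' \<in> \<hh> \<and> (\<forall>i<n. \<alpha> i H' = of_nat (d i) * lam (hh i))" for H H'
      using that by (intro sroot_inj) auto
  qed
  then show ?thesis unfolding hvec_def by (rule theI')
qed

lemma hvec_hset: "lam \<in> \<hh>' \<Longrightarrow> h\<^sub>g lam \<in> \<hh>" using hvec_prop by blast
lemma hvec_sroot: "lam \<in> \<hh>' \<Longrightarrow> i < n \<Longrightarrow> \<alpha> i (h\<^sub>g lam) = of_nat (d i) * lam (hh i)" using hvec_prop by blast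

lemma hvec_eqI: assumes "lam \<in> \<hh>'" "H \<in> \<hh>" "\<forall>i<n. \<alpha> i H = of_nat (d i) * lam (hh i)" shows "h\<^sub>g lam = H"
  using sroot_inj[OF hvec_hset[OF assms(1)] assms(2)] hvec_sroot[OF assms(1)] assms(3) by simp

lemma hvec_surj: assumes H: "H \<in> \<hh>" shows "\<exists>lam\<in>\<hh>'. h\<^sub>g lam = H"
proof -
  define lam where "lam = dual_of (\<lambda>i. \<alpha> i H / of_nat (d i))"
  have lam: "lam \<in> \<hh>'" by (simp add: lam_def dual_of_hdual)
  have "\<forall>i<n. \<alpha> i H = of_nat (d i) * lam (hh i)"
    using d_pos by (auto simp: lam_def dual_of_hh)
  then show ?thesis using hvec_eqI[OF lam H] lam by blast
qed

lemma hdual_hh_val: assumes lam: "lam \<in> \<hh>'" and j: "j < n" and H: "h\<^sub>g lam = (\<Sum>k<n. sc (e k) (hh k))"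
  shows "lam (hh j) = (\<Sum>k<n. e k * of_int (C k j)) / of_nat (d j)"
  using hvec_sroot[OF lam j] d_pos[OF j] unfolding H sroot_sum by (simp add: field_simps)

lemma cartan_sym_div: "j < n \<Longrightarrow> k < n \<Longrightarrow> complex_of_int (C k j) / of_nat (d j) = of_int (C j k) / of_nat (d k)"
proof -
  assume jk: "j < n" "k < n"
  have "complex_of_int (int (d k) * C k j) = complex_of_int (int (d j) * C j k)" using cartan_symmetrizable[OF jk(2) jk(1)] by simp
  then have "of_nat (d k) * complex_of_int (C k j) = of_nat (d j) * of_int (C j k)" by simp
  then show ?thesis using d_pos[OF jk(1)] d_pos[OF jk(2)] by (simp add: field_simps)
qed

lemma hvec_sym: assumes lam: "lam \<in> \<hh>'" and mu: "mu \<in> \<hh>'" shows "lam (h\<^sub>g mu) = mu (h\<^sub>g lam)"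
proof -
  obtain c where c: "h\<^sub>g mu = (\<Sum>j<n. sc (c j) (hh j))" using hset_elim[OF hvec_hset[OF mu]] by blast
  obtain e where e: "h\<^sub>g lam = (\<Sum>j<n. sc (e j) (hh j))" using hset_elim[OF hvec_hset[OF lam]] by blast
  have "lam (h\<^sub>g mu) = (\<Sum>j<n. c j * ((\<Sum>k<n. e k * of_int (C k j)) / of_nat (d j)))"
    unfolding c hdual_sum[OF lam] using hdual_hh_val[OF lam _ e] by (intro sum.cong) auto
  also have "\<dots> = (\<Sum>j<n. \<Sum>k<n. c j * e k * (of_int (C k j) / of_nat (d j)))"
    by (simp add: sum_distrib_left sum_divide_distrib mult.assoc)
  also have "\<dots> = (\<Sum>j<n. \<Sum>k<n. c j * e k * (of_int (C j k) / of_nat (d k)))"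
    by (intro sum.cong refl) (simp add: cartan_sym_div)
  also have "\<dots> = (\<Sum>k<n. \<Sum>j<n. e k * c j * (of_int (C j k) / of_nat (d k)))"
    by (subst sum.swap) (simp add: mult.commute)
  also have "\<dots> = (\<Sum>k<n. e k * ((\<Sum>j<n. c j * of_int (C j k)) / of_nat (d k)))"
    by (simp add: sum_distrib_left sum_divide_distrib mult.assoc)
  also have "\<dots> = mu (h\<^sub>g lam)"
    unfolding e hdual_sum[OF mu] using hdual_hh_val[OF mu _ c] by (intro sum.cong) auto
  finally show ?thesis .
qed

lemma hdual_zero_on_hvec: assumes psi: "psi \<in> \<hh>'" and z: "\<forall>mu\<in>\<hh>'. psi (h\<^sub>g mu) = 0" shows "psi = (\<lambda>_. 0)"
proof (rule hdual_ext[OF psi zero_hdual], intro allI impI)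
  fix i assume "i < n"
  then obtain mu where mu: "mu \<in> \<hh>'" "h\<^sub>g mu = hh i" using hvec_surj[OF hh_hset] by blast
  from z mu(1) have "psi (h\<^sub>g mu) = 0" by blast
  then show "psi (hh i) = 0" using mu(2) by simp
qed

lemma Phi_zero: assumes "\<forall>mu\<in>\<hh>'. uform n u hh lam mu = 0"
  shows "Phi n C d u sc hh lam = (\<lambda>_. 0)"
  unfolding Phi_def
proof (rule the_equality)
  show "(\<lambda>_. 0) \<in> \<hh>' \<and> (\<forall>mu\<in>\<hh>'. hform n C d sc hh (\<lambda>_. 0) mu = uform n u hh lam mu)"
    using assms zero_hdual by (simp add: hform_def)
  show "psi = (\<lambda>_. 0)" if "psi \<in> \<hh>' \<and> (\<forall>mu\<in>\<hh>'. hform n C d sc hh psi mu = uform n u hh lam mu)" for psi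
    using that assms by (intro hdual_zero_on_hvec) (auto simp: hform_def)
qed

lemma Phi_zero_on_rad: "lam \<in> rad_u n u sc hh \<Longrightarrow> Phi n C d u sc hh lam = (\<lambda>_. 0)"
  unfolding rad_u_def by (rule Phi_zero) blast

lemma Phi_zero_if_u_zero: "\<forall>i<n. \<forall>j<n. u i j = 0 \<Longrightarrow> Phi n C d u sc hh lam = (\<lambda>_. 0)"
  by (rule Phi_zero) (simp add: uform_def)

section \<open>Root spaces\<close>

lemma rootspace_subspace: "vs.subspace (rootsp a)"
proof (rule vs.subspaceI)
  show "0 \<in> rootsp a" by (simp add: rootspace_def)
  show "x + y \<in> rootsp a" if "x \<in> rootsp a" "y \<in> rootsp a" for x y
    using that by (simp add: rootspace_def br_addr vs.scale_right_distrib)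
  show "sc c x \<in> rootsp a" if "x \<in> rootsp a" for c x
    using that by (simp add: rootspace_def br_scr vs.scale_left_commute)
qed

lemma rootspace_br: assumes H: "H \<in> \<hh>" and x: "x \<in> rootsp a" shows "br H x = sc (a H) x"
  using assms by (simp add: rootspace_def)

lemma hset_rootspace_zero: "\<hh> \<subseteq> rootsp (\<lambda>_. 0)"
  by (auto simp: rootspace_def hset_abelian)

lemma br_rootspace: assumes x: "x \<in> rootsp a" and y: "y \<in> rootsp b" shows "br x y \<in> rootsp (\<lambda>z. a z + b z)"
  unfolding rootspace_def
proof (intro CollectI ballI)
  fix H assume H: "H \<in> \<hh>"
  have j: "br H (br x y) + br x (br y H) + br y (br H x) = 0" by (rule br_jac)
  have "br x (br y H) = - sc (b H) (br x y)"
    using rootspace_br[OF H y] by (simp add: br_anti[of y H] br_neg_r br_scr)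
  moreover have "br y (br H x) = - sc (a H) (br x y)"
    using rootspace_br[OF H x] by (simp add: br_scr br_anti[of y x])
  moreover have "br H (br x y) = - (br x (br y H) + br y (br H x))"
    using j by (subst eq_neg_iff_add_eq_0) (simp add: add.assoc)
  ultimately have "br H (br x y) = sc (b H) (br x y) + sc (a H) (br x y)"
    by simp
  then show "br H (br x y) = sc (a H + b H) (br x y)" by (simp add: vs.scale_left_distrib add.commute)
qed

lemma xp_rootspace: assumes i: "i < n" shows "xp i \<in> rootsp (\<alpha> i)"
  unfolding rootspace_def
proof (intro CollectI ballI)
  fix H assume "H \<in> \<hh>"
  then obtain c where c: "H = (\<Sum>j<n. sc (c j) (hh j))" by (rule hset_elim)
  show "br H (xp i) = sc (\<alpha> i H) (xp i)" unfolding c br_hsum_xp[OF i] sroot_sum ..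
qed

lemma xm_rootspace: assumes i: "i < n" shows "xm i \<in> rootsp (\<lambda>z. - \<alpha> i z)"
  unfolding rootspace_def
proof (intro CollectI ballI)
  fix H assume "H \<in> \<hh>"
  then obtain c where c: "H = (\<Sum>j<n. sc (c j) (hh j))" by (rule hset_elim)
  show "br H (xm i) = sc (- \<alpha> i H) (xm i)" unfolding c br_hsum_xm[OF i] sroot_sum ..
qed

lemma xm_nonzero: assumes i: "i < n" shows "xm i \<noteq> 0"
proof
  assume "xm i = 0"
  then have "hh i = 0" using xp_xm[OF i i] by simp
  then have "sc (of_int (C i i)) (xp i) = 0" using hh_xp[OF i i] by simp
  then show False using cartan_diag[OF i] xp_nonzero[OF i] by simp
qed

lemma sroot_nonzero: "i < n \<Longrightarrow> \<alpha> i \<noteq> (\<lambda>_. 0)"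
proof
  assume i: "i < n" and "\<alpha> i = (\<lambda>_. 0)"
  then have "\<alpha> i (hh i) = 0" by simp
  then show False using sroot_hh[OF i, of i] cartan_diag[OF i] by simp
qed

lemma sroot_pos: assumes i: "i < n" shows "pos_root n C sc br hh (\<alpha> i)"
  unfolding pos_root_def is_root_def
proof (intro conjI)
  show "\<alpha> i \<in> \<hh>'" by (rule sroot_hdual)
  show "\<alpha> i \<noteq> (\<lambda>_. 0)" by (rule sroot_nonzero[OF i])
  show "rootsp (\<alpha> i) \<noteq> {0}" using xp_rootspace[OF i] xp_nonzero[OF i] by blast
  show "\<exists>c::nat \<Rightarrow> nat. \<forall>H\<in>\<hh>. \<alpha> i H = (\<Sum>k<n. of_nat (c k) * \<alpha> k H)"
  proof (intro exI[of _ "\<lambda>k. if k = i then 1 else 0"] ballI)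
    fix H
    have "(\<Sum>k<n. of_nat (if k = i then 1 else 0) * \<alpha> k H) = (\<Sum>k<n. if k = i then \<alpha> k H else 0)"
      by (rule sum.cong) auto
    also have "\<dots> = \<alpha> i H" using i by simp
    finally show "\<alpha> i H = (\<Sum>k<n. of_nat (if k = i then 1 else 0) * \<alpha> k H)" by simp
  qed
qed

lemma sroot_neg: assumes i: "i < n" shows "neg_root n C sc br hh (\<lambda>z. - \<alpha> i z)"
  unfolding neg_root_def
proof
  show "isroot (\<lambda>z. - \<alpha> i z)"
    unfolding is_root_def
  proof (intro conjI)
    show "(\<lambda>z. - \<alpha> i z) \<in> \<hh>'" by (rule hdual_neg[OF sroot_hdual])
    show "(\<lambda>z. - \<alpha> i z) \<noteq> (\<lambda>_. 0)" using sroot_nonzero[OF i] by (auto simp: fun_eq_iff)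
    show "rootsp (\<lambda>z. - \<alpha> i z) \<noteq> {0}" using xm_rootspace[OF i] xm_nonzero[OF i] by blast
  qed
  show "pos_root n C sc br hh (\<lambda>x. - (- \<alpha> i x))" using sroot_pos[OF i] by simp
qed

definition roots where "roots = {a. pos_root n C sc br hh a \<or> neg_root n C sc br hh a}"
definition rootvecs where "rootvecs = \<Union>{rootsp a | a. a \<in> roots}"
definition \<nn> where "\<nn> = vs.span rootvecs"

lemma roots_isroot: "a \<in> roots \<Longrightarrow> isroot a"
  unfolding roots_def pos_root_def neg_root_def by blast

lemma root_hdual: "isroot a \<Longrightarrow> a \<in> \<hh>'" unfolding is_root_def by blast
lemma root_nonzero: "isroot a \<Longrightarrow> a \<noteq> (\<lambda>_. 0)" unfolding is_root_def by blast

lemma nset_eq: "nset n C sc br hh = \<nn>"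
proof -
  have "rootvecs = \<Union>{rootsp a | a. neg_root n C sc br hh a} \<union> \<Union>{rootsp a | a. pos_root n C sc br hh a}"
    unfolding rootvecs_def roots_def by blast
  then have "\<nn> = vs.span (\<Union>{rootsp a | a. neg_root n C sc br hh a} \<union> \<Union>{rootsp a | a. pos_root n C sc br hh a})"
    unfolding \<nn>_def by simp
  then show ?thesis
    unfolding nset_def nminus_def nplus_def lin_span_eq vs.span_Un by simp
qed

lemma nset_subspace: "vs.subspace \<nn>" unfolding \<nn>_def by simp

lemma rootspace_nset: "a \<in> roots \<Longrightarrow> rootsp a \<subseteq> \<nn>"
  unfolding \<nn>_def rootvecs_def by (auto intro: vs.span_base)

lemma xp_nset: "i < n \<Longrightarrow> xp i \<in> \<nn>" using rootspace_nset[of "\<alpha> i"] xp_rootspace sroot_pos by (auto simp: roots_def)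
lemma xm_nset: "i < n \<Longrightarrow> xm i \<in> \<nn>" using rootspace_nset[of "\<lambda>z. - \<alpha> i z"] xm_rootspace sroot_neg by (auto simp: roots_def)

section \<open>Independence of root spaces\<close>

lemma hdual_neq: assumes "a \<in> \<hh>'" "b \<in> \<hh>'" "a \<noteq> b" shows "\<exists>H\<in>\<hh>. a H \<noteq> b H"
proof (rule ccontr)
  assume "\<not> ?thesis"
  then have "a x = b x" for x using assms hdual_out[of a x] hdual_out[of b x] by (cases "x \<in> \<hh>") auto
  then show False using assms(3) by auto
qed

lemma rootspace_sum_zero:
  "finite F \<Longrightarrow> F \<subseteq> \<hh>' \<Longrightarrow> (\<forall>b\<in>F. v b \<in> rootsp b) \<Longrightarrow> sum v F = 0 \<Longrightarrow> (\<forall>b\<in>F. v b = 0)"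
proof (induction F arbitrary: v rule: finite_induct)
  case empty then show ?case by simp
next
  case (insert g F)
  let ?S = "sum v F"
  have sum0: "v g + ?S = 0" using insert by simp
  have vF: "\<forall>b\<in>F. v b \<in> rootsp b" using insert by simp
  have vg: "v g \<in> rootsp g" using insert by simp
  have zero_F: "v b = 0" if b: "b \<in> F" for b
  proof -
    have "b \<noteq> g" using insert b by auto
    moreover have "b \<in> \<hh>'" "g \<in> \<hh>'" using insert b by auto
    ultimately obtain H where H: "H \<in> \<hh>" "b H \<noteq> g H" using hdual_neq by metis
    \<comment> \<open>applying \<open>ad H - g(H)\<close> kills the summand of weight \<open>g\<close> and gives a shorter relation\<close>
    define w where "w c = sc (c H - g H) (v c)" for c
    have wrs: "\<forall>c\<in>F. w c \<in> rootsp c" using vF rootspace_subspace vs.subspace_scale unfolding w_def by blast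
    have "br H ?S = (\<Sum>c\<in>F. sc (c H) (v c))"
      unfolding br_sum_r using vF H rootspace_br by (intro sum.cong) auto
    moreover have "br H ?S = sc (g H) ?S"
    proof -
      have S: "?S = - v g" using sum0 by (simp add: eq_neg_iff_add_eq_0 add.commute)
      show ?thesis unfolding S br_neg_r rootspace_br[OF H(1) vg] by simp
    qed
    ultimately have "sum w F = 0"
      unfolding w_def by (simp add: vs.scale_left_diff_distrib sum_subtractf vs.scale_sum_right)
    then have "\<forall>c\<in>F. w c = 0" using insert.IH[of w] wrs insert.prems by auto
    then have "w b = 0" using b by blast
    then show ?thesis using H(2) by (simp add: w_def)
  qed
  then have "?S = 0" by simp
  then have "v g = 0" using sum0 by simp
  then show ?case using zero_F by auto
qed

definition rootspace_sums where "rootspace_sums A = {sum v F | F v. finite F \<and> F \<subseteq> A \<and> (\<forall>b\<in>F. v b \<in> rootsp b)}"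

lemma rootspace_sums_subspace: "vs.subspace (rootspace_sums A)"
proof (rule vs.subspaceI)
  show "0 \<in> rootspace_sums A" unfolding rootspace_sums_def by (rule CollectI, intro exI[of _ "{}"]) auto
  show "x + y \<in> rootspace_sums A" if "x \<in> rootspace_sums A" "y \<in> rootspace_sums A" for x y
  proof -
    from that(1) obtain F1 v1 where 1: "x = sum v1 F1" "finite F1" "F1 \<subseteq> A" "\<forall>b\<in>F1. v1 b \<in> rootsp b"
      unfolding rootspace_sums_def by blast
    from that(2) obtain F2 v2 where 2: "y = sum v2 F2" "finite F2" "F2 \<subseteq> A" "\<forall>b\<in>F2. v2 b \<in> rootsp b"
      unfolding rootspace_sums_def by blast
    define w where "w b = (if b \<in> F1 then v1 b else 0) + (if b \<in> F2 then v2 b else 0)" for b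
    have "sum w (F1 \<union> F2) = sum (\<lambda>b. if b \<in> F1 then v1 b else 0) (F1 \<union> F2) + sum (\<lambda>b. if b \<in> F2 then v2 b else 0) (F1 \<union> F2)"
      unfolding w_def by (rule sum.distrib)
    also have "sum (\<lambda>b. if b \<in> F1 then v1 b else 0) (F1 \<union> F2) = sum v1 F1"
      using 1(2) 2(2) by (simp add: sum.If_cases Int_absorb1)
    also have "sum (\<lambda>b. if b \<in> F2 then v2 b else 0) (F1 \<union> F2) = sum v2 F2"
      using 1(2) 2(2) by (simp add: sum.If_cases Int_absorb1)
    finally have "x + y = sum w (F1 \<union> F2)" using 1 2 by simp
    moreover have "\<forall>b\<in>F1 \<union> F2. w b \<in> rootsp b"
      unfolding w_def using 1(4) 2(4) rootspace_subspace vs.subspace_add vs.subspace_0 by (auto simp del: Un_iff)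
    ultimately show ?thesis unfolding rootspace_sums_def using 1(2,3) 2(2,3) by blast
  qed
  show "sc c x \<in> rootspace_sums A" if "x \<in> rootspace_sums A" for c x
  proof -
    from that obtain F v where 1: "x = sum v F" "finite F" "F \<subseteq> A" "\<forall>b\<in>F. v b \<in> rootsp b"
      unfolding rootspace_sums_def by blast
    have "sc c x = sum (\<lambda>b. sc c (v b)) F" using 1 by (simp add: vs.scale_sum_right)
    moreover have "\<forall>b\<in>F. sc c (v b) \<in> rootsp b" using 1(4) rootspace_subspace vs.subspace_scale by blast
    ultimately show ?thesis unfolding rootspace_sums_def using 1(2,3) by blast
  qed
qed

lemma nset_rootspace_sums: "\<nn> \<subseteq> rootspace_sums roots"
  unfolding \<nn>_def
proof (rule vs.span_minimal[OF _ rootspace_sums_subspace])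
  show "rootvecs \<subseteq> rootspace_sums roots"
  proof
    fix x assume "x \<in> rootvecs"
    then obtain a where a: "a \<in> roots" "x \<in> rootsp a" unfolding rootvecs_def by blast
    have "x = sum (\<lambda>_. x) {a}" by simp
    then show "x \<in> rootspace_sums roots" unfolding rootspace_sums_def using a by blast
  qed
qed

lemma roots_hdual: "roots \<subseteq> \<hh>'" using roots_isroot root_hdual by blast
lemma roots_nonzero: "(\<lambda>_. 0) \<notin> roots" using roots_isroot root_nonzero by blast

lemma nset_hset_zero: assumes y: "y \<in> \<nn>" "y \<in> \<hh>" shows "y = 0"
proof -
  obtain F v where F: "y = sum v F" "finite F" "F \<subseteq> roots" "\<forall>b\<in>F. v b \<in> rootsp b"
    using nset_rootspace_sums y(1) unfolding rootspace_sums_def by blast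
  define z :: "'g \<Rightarrow> complex" where "z = (\<lambda>_. 0)"
  have zF: "z \<notin> F" using F(3) roots_nonzero by (auto simp: z_def)
  define w where "w b = (if b = z then - y else v b)" for b
  have "sum w (insert z F) = - y + sum v F"
    using zF F(2) by (simp add: w_def) (rule sum.cong, auto)
  then have s0: "sum w (insert z F) = 0" using F(1) by simp
  have "insert z F \<subseteq> \<hh>'" using F(3) roots_hdual zero_hdual by (auto simp: z_def)
  moreover have "\<forall>b\<in>insert z F. w b \<in> rootsp b"
    using F(4) zF y(2) hset_rootspace_zero vs.subspace_neg[OF rootspace_subspace] by (auto simp: w_def z_def)
  ultimately have "\<forall>b\<in>insert z F. w b = 0" using rootspace_sum_zero[OF _ _ _ s0] F(2) by blast
  then show ?thesis by (simp add: w_def)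
qed

section \<open>The algebra \<open>\<dd>\<close>\<close>

abbreviation "\<dd> \<equiv> dset n C sc br hh"
abbreviation h\<^sub>d :: "('g \<Rightarrow> complex) \<Rightarrow> 'g \<times> 'g \<times> 'g" where "h\<^sub>d \<equiv> hD n C d sc hh"
abbreviation k\<^sub>d :: "('g \<Rightarrow> complex) \<Rightarrow> 'g \<times> 'g \<times> 'g" where "k\<^sub>d \<equiv> kD n C d sc hh"
abbreviation "form \<equiv> hform n C d sc hh"

lemmas d_bracket_facts = d_brd[unfolded d_bracket_def]
lemmas d_lie_facts = d_bracket_facts[THEN conjunct1, unfolded lie_algebra_def]

lemma dset_subspace: "dv.subspace \<dd>" using d_lie_facts[THEN conjunct1] by (simp add: dis_subspace_eq)
lemma dbr_closed: "x \<in> \<dd> \<Longrightarrow> y \<in> \<dd> \<Longrightarrow> brd x y \<in> \<dd>"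
  using d_lie_facts[THEN conjunct2, THEN conjunct1] by blast
lemma dbr_addl: "x \<in> \<dd> \<Longrightarrow> y \<in> \<dd> \<Longrightarrow> z \<in> \<dd> \<Longrightarrow> brd (x + y) z = brd x z + brd y z"
  using d_lie_facts[THEN conjunct2, THEN conjunct2, THEN conjunct1] by blast
lemma dbr_addr: "x \<in> \<dd> \<Longrightarrow> y \<in> \<dd> \<Longrightarrow> z \<in> \<dd> \<Longrightarrow> brd x (y + z) = brd x y + brd x z"
  using d_lie_facts[THEN conjunct2, THEN conjunct2, THEN conjunct1] by blast
lemma dbr_scl: "x \<in> \<dd> \<Longrightarrow> y \<in> \<dd> \<Longrightarrow> brd (dscale sc c x) y = dscale sc c (brd x y)"
  using d_lie_facts[THEN conjunct2, THEN conjunct2, THEN conjunct2, THEN conjunct1] by blast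
lemma dbr_scr: "x \<in> \<dd> \<Longrightarrow> y \<in> \<dd> \<Longrightarrow> brd x (dscale sc c y) = dscale sc c (brd x y)"
  using d_lie_facts[THEN conjunct2, THEN conjunct2, THEN conjunct2, THEN conjunct1] by blast
lemma dbr_alt: "x \<in> \<dd> \<Longrightarrow> brd x x = 0"
  using d_lie_facts[THEN conjunct2, THEN conjunct2, THEN conjunct2, THEN conjunct2, THEN conjunct1] by blast

lemma dset_add: "x \<in> \<dd> \<Longrightarrow> y \<in> \<dd> \<Longrightarrow> x + y \<in> \<dd>" using dset_subspace dv.subspace_add by blast
lemma dset_neg: "x \<in> \<dd> \<Longrightarrow> - x \<in> \<dd>" using dset_subspace dv.subspace_neg by blast
lemma dset_diff: "x \<in> \<dd> \<Longrightarrow> y \<in> \<dd> \<Longrightarrow> x - y \<in> \<dd>" using dset_subspace dv.subspace_diff by blast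
lemma dset_0: "0 \<in> \<dd>" using dset_subspace dv.subspace_0 by blast

lemma dbr_0r: "y \<in> \<dd> \<Longrightarrow> brd y 0 = 0" using dbr_addr[OF _ dset_0 dset_0, of y] by simp

lemma dbr_anti: assumes "x \<in> \<dd>" "y \<in> \<dd>" shows "brd x y = - brd y x"
proof -
  have "0 = brd (x + y) (x + y)" using assms by (simp add: dbr_alt dset_add)
  also have "\<dots> = (brd x x + brd y x) + (brd x y + brd y y)"
    using assms by (simp add: dbr_addl dbr_addr dset_add)
  finally have "brd x y + brd y x = 0" using assms by (simp add: dbr_alt add.commute)
  then show ?thesis by (metis add.commute neg_eq_iff_add_eq_0)
qed

lemma dbr_neg_r: assumes "x \<in> \<dd>" "y \<in> \<dd>" shows "brd x (- y) = - brd x y"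
proof -
  have "brd x y + brd x (- y) = 0" using dbr_addr[of x y "- y"] dbr_0r assms dset_neg by simp
  then show ?thesis by (metis add.commute eq_neg_iff_add_eq_0)
qed
lemma dbr_diff_r: "x \<in> \<dd> \<Longrightarrow> y \<in> \<dd> \<Longrightarrow> z \<in> \<dd> \<Longrightarrow> brd x (y - z) = brd x y - brd x z"
  using dbr_addr[of x y "- z"] dbr_neg_r dset_neg by simp

lemma dbr_hx: "lam \<in> \<hh>' \<Longrightarrow> isroot a \<Longrightarrow> x \<in> rootsp a \<Longrightarrow>
   brd (h\<^sub>d lam) (xD x) = dscale sc (- form (Phi_minus n C d u sc hh lam) a) (xD x)"
  using d_bracket_facts[THEN conjunct2, THEN conjunct2, THEN conjunct1] by blast
lemma dbr_kx: "lam \<in> \<hh>' \<Longrightarrow> isroot a \<Longrightarrow> x \<in> rootsp a \<Longrightarrow>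
   brd (k\<^sub>d lam) (xD x) = dscale sc (form (Phi_plus n C d u sc hh lam) a) (xD x)"
  using d_bracket_facts[THEN conjunct2, THEN conjunct2, THEN conjunct1] by blast
lemma dbr_xx: "isroot a \<Longrightarrow> isroot b \<Longrightarrow> (\<lambda>x. a x + b x) \<noteq> (\<lambda>_. 0) \<Longrightarrow> x \<in> rootsp a \<Longrightarrow> y \<in> rootsp b \<Longrightarrow>
   brd (xD x) (xD y) = xD (br x y)"
  using d_bracket_facts[THEN conjunct2, THEN conjunct2, THEN conjunct2, THEN conjunct1] by blast
lemma dbr_xxm: "isroot a \<Longrightarrow> x \<in> rootsp a \<Longrightarrow> y \<in> rootsp (\<lambda>z. - a z) \<Longrightarrow>
   brd (xD x) (xD y) = (0, sc (1/2) (br x y), sc (1/2) (br x y))"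
  using d_bracket_facts[THEN conjunct2, THEN conjunct2, THEN conjunct2, THEN conjunct2] by blast

lemma dset_eq: "\<dd> = \<nn> \<times> \<hh> \<times> \<hh>" unfolding dset_def nset_eq ..

lemma hd_dset: "lam \<in> \<hh>' \<Longrightarrow> h\<^sub>d lam \<in> \<dd>" by (simp add: dset_eq hD_def hvec_hset vs.subspace_0[OF nset_subspace] vs.subspace_0[OF hset_subspace])
lemma kd_dset: "lam \<in> \<hh>' \<Longrightarrow> k\<^sub>d lam \<in> \<dd>" by (simp add: dset_eq kD_def hvec_hset vs.subspace_0[OF nset_subspace] vs.subspace_0[OF hset_subspace])
lemma xD_dset: "x \<in> \<nn> \<Longrightarrow> xD x \<in> \<dd>" by (simp add: dset_eq xD_def vs.subspace_0[OF hset_subspace])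

lemma dbr_cartan:
  assumes "lam \<in> \<hh>'" "mu \<in> \<hh>'"
  shows "brd (h\<^sub>d lam) (h\<^sub>d mu) = 0" "brd (h\<^sub>d lam) (k\<^sub>d mu) = 0"
    and "brd (k\<^sub>d lam) (h\<^sub>d mu) = 0" "brd (k\<^sub>d lam) (k\<^sub>d mu) = 0"
proof -
  have hk: "brd (h\<^sub>d lam) (h\<^sub>d mu) = 0 \<and> brd (h\<^sub>d lam) (k\<^sub>d mu) = 0 \<and> brd (k\<^sub>d lam) (k\<^sub>d mu) = 0"
    if "lam \<in> \<hh>'" "mu \<in> \<hh>'" for lam mu
    using d_bracket_facts[THEN conjunct2, THEN conjunct1] that by blast
  show "brd (h\<^sub>d lam) (h\<^sub>d mu) = 0" "brd (h\<^sub>d lam) (k\<^sub>d mu) = 0" "brd (k\<^sub>d lam) (k\<^sub>d mu) = 0"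
    using hk[OF assms] by auto
  show "brd (k\<^sub>d lam) (h\<^sub>d mu) = 0"
    using dbr_anti[OF kd_dset[OF assms(1)] hd_dset[OF assms(2)]] hk[OF assms(2,1)] by simp
qed

lemma half_half: "sc (1/2) z + sc (1/2) z = z"
  by (simp flip: vs.scale_left_distrib)

section \<open>\<open>\<gg> = \<nn> + \<hh>\<close>\<close>

definition n_plus_h where "n_plus_h = {y + H | y H. y \<in> \<nn> \<and> H \<in> \<hh>}"

lemma n_plus_h_span: "n_plus_h = vs.span (rootvecs \<union> \<hh>)"
proof -
  have hs: "vs.span \<hh> = \<hh>" using hset_subspace by simp
  show ?thesis unfolding n_plus_h_def vs.span_Un \<nn>_def[symmetric] hs ..
qed

lemma nset_n_plus_h: "y \<in> \<nn> \<Longrightarrow> y \<in> n_plus_h" unfolding n_plus_h_def using vs.subspace_0[OF hset_subspace] by force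
lemma hset_n_plus_h: "H \<in> \<hh> \<Longrightarrow> H \<in> n_plus_h" unfolding n_plus_h_def using vs.subspace_0[OF nset_subspace] by force

lemma br_rootvecs_rootvecs: assumes a: "a \<in> rootsp al" "al \<in> roots" and b: "b \<in> rootsp be" "be \<in> roots"
  shows "br a b \<in> n_plus_h"
proof -
  have aN: "a \<in> \<nn>" "b \<in> \<nn>" using rootspace_nset a b by auto
  show ?thesis
  proof (cases "(\<lambda>x. al x + be x) = (\<lambda>_. 0)")
    case False
    have "xD (br a b) \<in> \<dd>"
      using dbr_xx[OF roots_isroot[OF a(2)] roots_isroot[OF b(2)] False a(1) b(1)] dbr_closed[OF xD_dset xD_dset] aN by metis
    then show ?thesis by (auto simp: dset_eq xD_def intro: nset_n_plus_h)
  next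
    case True
    then have be: "be = (\<lambda>z. - al z)" by (auto simp: fun_eq_iff eq_neg_iff_add_eq_0 add.commute)
    have "(0, sc (1/2) (br a b), sc (1/2) (br a b)) \<in> \<dd>"
      using dbr_xxm[OF roots_isroot[OF a(2)] a(1)] b(1) be dbr_closed[OF xD_dset xD_dset] aN by metis
    then have "sc (1/2) (br a b) \<in> \<hh>" by (simp add: dset_eq)
    then have "sc 2 (sc (1/2) (br a b)) \<in> \<hh>" using hset_subspace vs.subspace_scale by blast
    then show ?thesis by (simp add: hset_n_plus_h)
  qed
qed

lemma br_generators_n_plus_h:
  assumes "a \<in> rootvecs \<union> \<hh>" "b \<in> rootvecs \<union> \<hh>" shows "br a b \<in> n_plus_h"
proof -
  consider (roots) al be where "a \<in> rootsp al" "al \<in> roots" "b \<in> rootsp be" "be \<in> roots"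
    | (root_h) al where "a \<in> rootsp al" "al \<in> roots" "b \<in> \<hh>"
    | (h_root) be where "a \<in> \<hh>" "b \<in> rootsp be" "be \<in> roots"
    | (h_h) "a \<in> \<hh>" "b \<in> \<hh>"
    using assms unfolding rootvecs_def by blast
  then show ?thesis
  proof cases
    case roots then show ?thesis by (rule br_rootvecs_rootvecs)
  next
    case root_h
    have "br a b = - sc (al b) a" using rootspace_br[OF root_h(3,1)] br_anti[of a b] by simp
    moreover have "- sc (al b) a \<in> \<nn>"
      using rootspace_nset[OF root_h(2)] root_h(1) nset_subspace vs.subspace_neg vs.subspace_scale by blast
    ultimately show ?thesis using nset_n_plus_h by simp
  next
    case h_root
    have "br a b = sc (be a) b" using rootspace_br[OF h_root(1,2)] by simp
    moreover have "sc (be a) b \<in> \<nn>"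
      using rootspace_nset[OF h_root(3)] h_root(2) nset_subspace vs.subspace_scale by blast
    ultimately show ?thesis using nset_n_plus_h by simp
  next
    case h_h then show ?thesis using hset_abelian hset_n_plus_h vs.subspace_0[OF hset_subspace] by simp
  qed
qed

lemma n_plus_h_subalgebra: "x \<in> n_plus_h \<Longrightarrow> y \<in> n_plus_h \<Longrightarrow> br x y \<in> n_plus_h"
  by (rule bilin_span_closed[OF vs.vector_space_axioms vs.vector_space_axioms vs.subspace_UNIV
        subset_UNIV subset_UNIV, where f=br and A="rootvecs \<union> \<hh>" and B="rootvecs \<union> \<hh>"])
     (auto simp: n_plus_h_span br_addl br_addr br_scl br_scr br_generators_n_plus_h[unfolded n_plus_h_span])

lemma n_plus_h_UNIV: "n_plus_h = UNIV"
proof -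
  have "lie_generated sc br ({hh i | i. i < n} \<union> {xp i | i. i < n} \<union> {xm i | i. i < n}) \<subseteq> n_plus_h"
    unfolding lie_generated_def
  proof (rule Inter_lower, intro CollectI conjI ballI)
    show "{hh i | i. i < n} \<union> {xp i | i. i < n} \<union> {xm i | i. i < n} \<subseteq> n_plus_h"
      using hh_hset xp_nset xm_nset hset_n_plus_h nset_n_plus_h by auto
    show "is_subspace sc n_plus_h" unfolding is_subspace_eq n_plus_h_span by simp
  qed (rule n_plus_h_subalgebra)
  then show ?thesis using generators_generate by auto
qed

lemma g_decompose: obtains y H where "y \<in> \<nn>" "H \<in> \<hh>" "z = y + H"
  using n_plus_h_UNIV unfolding n_plus_h_def by blast

lemma isroot_roots: assumes a: "isroot a" shows "a \<in> roots"
proof (rule ccontr)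
  assume naR: "a \<notin> roots"
  obtain x where x: "x \<in> rootsp a" "x \<noteq> 0" using a unfolding is_root_def using rootspace_subspace vs.subspace_0 by blast
  \<comment> \<open>writing \<open>x\<close> as a sum of vectors of weight \<open>0\<close> and of weights in \<open>roots\<close> contradicts independence\<close>
  obtain y H where yH: "y \<in> \<nn>" "H \<in> \<hh>" "x = y + H" by (rule g_decompose)
  obtain F v where F: "y = sum v F" "finite F" "F \<subseteq> roots" "\<forall>b\<in>F. v b \<in> rootsp b"
    using nset_rootspace_sums yH(1) unfolding rootspace_sums_def by blast
  define z :: "'g \<Rightarrow> complex" where "z = (\<lambda>_. 0)"
  have zF: "z \<notin> F" using F(3) roots_nonzero by (auto simp: z_def)
  have aF: "a \<notin> insert z F" using naR F(3) root_nonzero[OF a] by (auto simp: z_def)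
  define w where "w b = (if b = a then - x else if b = z then H else v b)" for b
  have "sum w (insert a (insert z F)) = - x + (H + sum v F)"
  proof -
    have "sum w (insert a (insert z F)) = w a + (w z + sum w F)"
      using aF zF F(2) by simp
    moreover have "sum w F = sum v F" using aF zF by (intro sum.cong) (auto simp: w_def)
    moreover have "z \<noteq> a" using aF by auto
    ultimately show ?thesis by (simp add: w_def)
  qed
  then have s0: "sum w (insert a (insert z F)) = 0" using F(1) yH(3) by (simp add: algebra_simps)
  have "insert a (insert z F) \<subseteq> \<hh>'" using F(3) roots_hdual zero_hdual root_hdual[OF a] by (auto simp: z_def)
  moreover have "\<forall>b\<in>insert a (insert z F). w b \<in> rootsp b"
    using F(4) aF zF yH(2) hset_rootspace_zero x(1) vs.subspace_neg[OF rootspace_subspace] by (auto simp: w_def z_def)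
  ultimately have "\<forall>b\<in>insert a (insert z F). w b = 0" using rootspace_sum_zero[OF _ _ _ s0] F(2) by blast
  then have "- x = 0" by (simp add: w_def)
  then show False using x(2) by simp
qed

lemma isroot_rootspace_nset: "isroot a \<Longrightarrow> x \<in> rootsp a \<Longrightarrow> x \<in> \<nn>" using isroot_roots rootspace_nset by blast

lemma xD_root_dset: "isroot a \<Longrightarrow> x \<in> rootsp a \<Longrightarrow> xD x \<in> \<dd>"
  using xD_dset isroot_rootspace_nset by blast

section \<open>The projection of \<open>\<dd>\<close> onto \<open>\<gg>\<close>\<close>

definition proj :: "'g \<times> 'g \<times> 'g \<Rightarrow> 'g" where "proj v = fst v + fst (snd v) + snd (snd v)"

lemma proj_add: "proj (v + w) = proj v + proj w" by (simp add: proj_def algebra_simps)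
lemma proj_scale: "proj (dscale sc c v) = sc c (proj v)" by (simp add: proj_def dscale_def vs.scale_right_distrib)
lemma proj_module_hom: "module_hom (dscale sc) sc proj"
  using proj_add proj_scale module_hom_iff_linear[of "dscale sc" sc proj]
  by (simp add: Vector_Spaces.linear_iff dv.vector_space_axioms vs.vector_space_axioms)
lemma proj_0: "proj 0 = 0" by (simp add: proj_def)
lemma proj_neg: "proj (- v) = - proj v" by (simp add: proj_def algebra_simps)
lemma proj_diff: "proj (v - w) = proj v - proj w" by (simp add: proj_def algebra_simps)
lemma proj_triple: "proj (a, b, c) = a + b + c" by (simp add: proj_def)
lemma proj_xD: "proj (xD x) = x" by (simp add: proj_def xD_def)
lemma proj_hd: "proj (h\<^sub>d l) = h\<^sub>g l" by (simp add: proj_def hD_def)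
lemma proj_kd: "proj (k\<^sub>d l) = h\<^sub>g l" by (simp add: proj_def kD_def)

lemma proj_anti:
  assumes "a \<in> \<dd>" "b \<in> \<dd>" "proj (brd a b) = br (proj a) (proj b)"
  shows "proj (brd b a) = br (proj b) (proj a)"
  using assms dbr_anti[OF assms(2) assms(1)] br_anti[of "proj b" "proj a"] by (simp add: proj_neg)

lemma proj_xD_xD:
  assumes "isroot a" "x \<in> rootsp a" "isroot b" "y \<in> rootsp b"
  shows "proj (brd (xD x) (xD y)) = br x y"
proof (cases "(\<lambda>z. a z + b z) = (\<lambda>_. 0)")
  case False
  then show ?thesis using dbr_xx[OF assms(1,3) False assms(2,4)] by (simp add: proj_xD)
next
  case True
  then have "b = (\<lambda>z. - a z)" by (auto simp: fun_eq_iff eq_neg_iff_add_eq_0 add.commute)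
  then have "brd (xD x) (xD y) = (0, sc (1/2) (br x y), sc (1/2) (br x y))"
    using dbr_xxm[OF assms(1,2)] assms(4) by simp
  then show ?thesis by (simp add: proj_triple half_half add.assoc)
qed

lemma xD_module_hom: "module_hom sc (dscale sc) xD"
  using module_hom_iff_linear[of sc "dscale sc" xD]
  by (simp add: Vector_Spaces.linear_iff dv.vector_space_axioms vs.vector_space_axioms xD_def dscale_def)

lemma xD_nset_span: "x \<in> \<nn> \<Longrightarrow> xD x \<in> dv.span (xD ` rootvecs)"
  using module_hom.span_image[OF xD_module_hom, of rootvecs] unfolding \<nn>_def by auto

definition dgens where
  "dgens = {xD x | x. x \<in> rootvecs} \<union> {h\<^sub>d l | l. l \<in> \<hh>'} \<union> {k\<^sub>d l | l. l \<in> \<hh>'}"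

lemma dgens_cases [consumes 1, case_names root h k]:
  assumes "a \<in> dgens"
  obtains (root) x al where "a = xD x" "isroot al" "x \<in> rootsp al"
    | (h) l where "a = h\<^sub>d l" "l \<in> \<hh>'"
    | (k) l where "a = k\<^sub>d l" "l \<in> \<hh>'"
  using assms roots_isroot unfolding dgens_def rootvecs_def by blast

lemma dgens_dset: "dgens \<subseteq> \<dd>"
  unfolding dgens_def rootvecs_def using xD_dset hd_dset kd_dset rootspace_nset by blast

lemma dset_span: "\<dd> \<subseteq> dv.span dgens"
proof
  fix v assume "v \<in> \<dd>"
  then obtain y H K where v: "v = (y, H, K)" "y \<in> \<nn>" "H \<in> \<hh>" "K \<in> \<hh>" by (auto simp: dset_eq)
  obtain l where l: "l \<in> \<hh>'" "h\<^sub>g l = H" using hvec_surj[OF v(3)] by blast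
  obtain m where m: "m \<in> \<hh>'" "h\<^sub>g m = K" using hvec_surj[OF v(4)] by blast
  have "v = xD y + h\<^sub>d l + k\<^sub>d m" using v l m by (simp add: xD_def hD_def kD_def)
  moreover have "xD ` rootvecs \<subseteq> dgens" unfolding dgens_def by blast
  then have "xD y \<in> dv.span dgens" using xD_nset_span[OF v(2)] dv.span_mono by blast
  moreover have "h\<^sub>d l \<in> dv.span dgens" "k\<^sub>d m \<in> dv.span dgens"
    using l m by (auto simp: dgens_def intro!: dv.span_base)
  ultimately show "v \<in> dv.span dgens" by (simp add: dv.span_add)
qed

lemma bilin_dset:
  assumes S: "module.subspace s2 S" and vs2: "vector_space s2"
    and addl: "\<And>x y z. x \<in> \<dd> \<Longrightarrow> y \<in> \<dd> \<Longrightarrow> z \<in> \<dd> \<Longrightarrow> f (x + y) z = f x z + f y z"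
    and addr: "\<And>x y z. x \<in> \<dd> \<Longrightarrow> y \<in> \<dd> \<Longrightarrow> z \<in> \<dd> \<Longrightarrow> f x (y + z) = f x y + f x z"
    and scl: "\<And>c x y. x \<in> \<dd> \<Longrightarrow> y \<in> \<dd> \<Longrightarrow> f (dscale sc c x) y = s2 c (f x y)"
    and scr: "\<And>c x y. x \<in> \<dd> \<Longrightarrow> y \<in> \<dd> \<Longrightarrow> f x (dscale sc c y) = s2 c (f x y)"
    and AD: "A \<subseteq> \<dd>" and BD: "B \<subseteq> \<dd>"
    and gen: "\<And>a b. a \<in> A \<Longrightarrow> b \<in> B \<Longrightarrow> f a b \<in> S"
    and x: "x \<in> dv.span A" and y: "y \<in> dv.span B"
  shows "f x y \<in> S"
  by (rule bilin_span_closed[OF dv.vector_space_axioms vs2 dset_subspace AD BD S addl addr scl scr gen x y])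

lemma proj_hom_of_generators:
  assumes A: "A \<subseteq> \<dd>" and gen: "\<And>a b. a \<in> A \<Longrightarrow> b \<in> A \<Longrightarrow> proj (brd a b) = br (proj a) (proj b)"
    and v: "v \<in> dv.span A" and w: "w \<in> dv.span A"
  shows "proj (brd v w) = br (proj v) (proj w)"
proof -
  have "proj (brd v w) - br (proj v) (proj w) \<in> {0}"
  proof (rule bilin_dset[OF vs.subspace_single_0 vs.vector_space_axioms _ _ _ _ A A,
        where f="\<lambda>v w. proj (brd v w) - br (proj v) (proj w)"])
    show "proj (brd a b) - br (proj a) (proj b) \<in> {0}" if "a \<in> A" "b \<in> A" for a b
      using gen[OF that] by simp
  qed (use v w in \<open>simp_all add: dbr_addl dbr_addr dbr_scl dbr_scr proj_add proj_scale
         br_addl br_addr br_scl br_scr vs.scale_right_diff_distrib algebra_simps\<close>)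
  then show ?thesis by simp
qed

section \<open>The solvable ideal \<open>\<ll>\<close>\<close>

definition lgens where "lgens = {h\<^sub>d l - k\<^sub>d l | l. l \<in> rad_u n u sc hh}"
definition \<ll> where "\<ll> = dv.span lgens"

lemma rad_hdual: "l \<in> rad_u n u sc hh \<Longrightarrow> l \<in> \<hh>'" unfolding rad_u_def by blast

lemma lgens_dset: "lgens \<subseteq> \<dd>" unfolding lgens_def using rad_hdual hd_dset kd_dset dset_diff by blast
lemma lideal_dset: "\<ll> \<subseteq> \<dd>" unfolding \<ll>_def using lgens_dset dset_subspace dv.span_minimal by blast
lemma lideal_subspace: "dv.subspace \<ll>" unfolding \<ll>_def by simp

lemma form_Phi_minus_if_Phi_zero:
  "Phi n C d u sc hh l = (\<lambda>_. 0) \<Longrightarrow> form (Phi_minus n C d u sc hh l) a = - l (h\<^sub>g a)"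
  by (simp add: hform_def Phi_minus_def)
lemma form_Phi_plus_if_Phi_zero:
  "Phi n C d u sc hh l = (\<lambda>_. 0) \<Longrightarrow> form (Phi_plus n C d u sc hh l) a = l (h\<^sub>g a)"
  by (simp add: hform_def Phi_plus_def)

lemma dbr_dgens_lgens: assumes a: "a \<in> dgens" and b: "b \<in> lgens" shows "brd a b = 0"
proof -
  obtain l where l: "l \<in> rad_u n u sc hh" "b = h\<^sub>d l - k\<^sub>d l" using b unfolding lgens_def by blast
  have lH: "l \<in> \<hh>'" using rad_hdual[OF l(1)] .
  have hk: "h\<^sub>d l \<in> \<dd>" "k\<^sub>d l \<in> \<dd>" using hd_dset kd_dset lH by auto
  from a show ?thesis
  proof (cases rule: dgens_cases)
    case (root x al)
    have xd: "xD x \<in> \<dd>" by (rule xD_root_dset[OF root(2,3)])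
    have "brd a b = - brd (h\<^sub>d l) (xD x) + brd (k\<^sub>d l) (xD x)"
      unfolding root(1) l(2) dbr_diff_r[OF xd hk] dbr_anti[OF xd hk(1)] dbr_anti[OF xd hk(2)] by simp
    \<comment> \<open>\<open>\<Phi>\<lambda> = 0\<close> for \<open>\<lambda> \<in> rad(u)\<close>, so \<open>h\<^sub>\<lambda>\<close> and \<open>k\<^sub>\<lambda>\<close> act on \<open>x\<^sub>\<alpha>\<close> by the same scalar \<open>(\<lambda>|\<alpha>)\<close>.\<close>
    also have "\<dots> = 0"
      using Phi_zero_on_rad[OF l(1)]
      unfolding dbr_hx[OF lH root(2,3)] dbr_kx[OF lH root(2,3)]
      by (simp add: form_Phi_minus_if_Phi_zero form_Phi_plus_if_Phi_zero)
    finally show ?thesis .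
  next
    case (h m)
    then show ?thesis using dbr_diff_r[OF hd_dset[OF h(2)] hk] dbr_cartan[OF h(2) lH] l(2) by simp
  next
    case (k m)
    then show ?thesis using dbr_diff_r[OF kd_dset[OF k(2)] hk] dbr_cartan[OF k(2) lH] l(2) by simp
  qed
qed

lemma dbr_dset_lideal: assumes v: "v \<in> \<dd>" and w: "w \<in> \<ll>" shows "brd v w = 0"
proof -
  have "brd v w \<in> {0}"
    by (rule bilin_dset[where f=brd, OF dv.subspace_single_0 dv.vector_space_axioms dbr_addl dbr_addr
          dbr_scl dbr_scr dgens_dset lgens_dset])
       (use dbr_dgens_lgens dset_span v w in \<open>auto simp: \<ll>_def\<close>)
  then show ?thesis by simp
qed

lemma lideal_ideal: "is_ideal \<dd> (dscale sc) brd \<ll>"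
  unfolding is_ideal_def dis_subspace_eq
  using lideal_dset lideal_subspace dbr_dset_lideal dv.subspace_0[OF lideal_subspace] by auto

lemma lideal_solvable: "solvable (dscale sc) brd \<ll>"
proof -
  have z: "brd x y = 0" if "x \<in> \<ll>" "y \<in> \<ll>" for x y
    using dbr_dset_lideal lideal_dset that by blast
  have l0: "0 \<in> \<ll>" by (rule dv.subspace_0[OF lideal_subspace])
  have "{brd x y | x y. x \<in> \<ll> \<and> y \<in> \<ll>} = {0}"
  proof
    show "{brd x y | x y. x \<in> \<ll> \<and> y \<in> \<ll>} \<subseteq> {0}" using z by blast
    have "brd 0 0 \<in> {brd x y | x y. x \<in> \<ll> \<and> y \<in> \<ll>}" using l0 by blast
    then show "{0} \<subseteq> {brd x y | x y. x \<in> \<ll> \<and> y \<in> \<ll>}" using z[OF l0 l0] by simp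
  qed
  then have "derived (dscale sc) brd \<ll> (Suc 0) = {0}" by (simp add: dlin_span_eq)
  then show ?thesis unfolding solvable_def by blast
qed

section \<open>The ideal \<open>\<mm>\<close>\<close>

definition mgens where
  "mgens = {xD x | x al. isroot al \<and> x \<in> rootsp al} \<union> {h\<^sub>d l + k\<^sub>d l | l. l \<in> \<hh>'}"
definition \<mm> where "\<mm> = dv.span mgens"

lemma mgens_cases [consumes 1, case_names root hk]:
  assumes "a \<in> mgens"
  obtains (root) x al where "a = xD x" "isroot al" "x \<in> rootsp al"
    | (hk) l where "a = h\<^sub>d l + k\<^sub>d l" "l \<in> \<hh>'"
  using assms unfolding mgens_def by blast

lemma mgens_dset: "mgens \<subseteq> \<dd>" unfolding mgens_def using xD_root_dset hd_dset kd_dset dset_add by blast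
lemma mideal_dset: "\<mm> \<subseteq> \<dd>" unfolding \<mm>_def using mgens_dset dset_subspace dv.span_minimal by blast
lemma mideal_subspace: "dv.subspace \<mm>" unfolding \<mm>_def by simp

lemma hd_plus_kd: "h\<^sub>d l + k\<^sub>d l = (0, h\<^sub>g l, h\<^sub>g l)" by (simp add: hD_def kD_def)

lemma diag_hset_mideal: assumes "H \<in> \<hh>" shows "(0, H, H) \<in> \<mm>"
proof -
  obtain l where "l \<in> \<hh>'" "h\<^sub>g l = H" using hvec_surj[OF assms] by blast
  then have "h\<^sub>d l + k\<^sub>d l \<in> mgens" "h\<^sub>d l + k\<^sub>d l = (0, H, H)" unfolding mgens_def hd_plus_kd by blast+
  then show ?thesis unfolding \<mm>_def by (metis dv.span_base)
qed

lemma xD_mideal: "isroot a \<Longrightarrow> x \<in> rootsp a \<Longrightarrow> xD x \<in> \<mm>"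
  unfolding \<mm>_def mgens_def by (rule dv.span_base) blast

lemma dbr_xD_xD_mideal:
  assumes a: "isroot a" "x \<in> rootsp a" and b: "isroot b" "y \<in> rootsp b"
  shows "brd (xD x) (xD y) \<in> \<mm>"
proof (cases "(\<lambda>z. a z + b z) = (\<lambda>_. 0)")
  case False
  have e: "brd (xD x) (xD y) = xD (br x y)" by (rule dbr_xx[OF a(1) b(1) False a(2) b(2)])
  have brs: "br x y \<in> rootsp (\<lambda>z. a z + b z)" by (rule br_rootspace[OF a(2) b(2)])
  show ?thesis
  proof (cases "br x y = 0")
    case True then show ?thesis using e dv.subspace_0[OF mideal_subspace] by (simp add: xD_def zero_prod_def)
  next
    case False
    with \<open>(\<lambda>z. a z + b z) \<noteq> (\<lambda>_. 0)\<close> have "isroot (\<lambda>z. a z + b z)" unfolding is_root_def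
      using hdual_plus[OF root_hdual[OF a(1)] root_hdual[OF b(1)]] brs by blast
    then show ?thesis using e xD_mideal brs by simp
  qed
next
  case True
  then have "b = (\<lambda>z. - a z)" by (auto simp: fun_eq_iff eq_neg_iff_add_eq_0 add.commute)
  then have e: "brd (xD x) (xD y) = (0, sc (1/2) (br x y), sc (1/2) (br x y))"
    using dbr_xxm[OF a(1) a(2)] b(2) by simp
  have "brd (xD x) (xD y) \<in> \<dd>" using dbr_closed xD_root_dset a b by blast
  then have "sc (1/2) (br x y) \<in> \<hh>" using e by (simp add: dset_eq)
  then show ?thesis using e diag_hset_mideal by simp
qed

lemma dbr_dgens_mgens: assumes a: "a \<in> dgens" and b: "b \<in> mgens" shows "brd a b \<in> \<mm>"
  using b
proof (cases rule: mgens_cases)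
  case (root y be)
  have "xD y \<in> \<mm>" using xD_mideal[OF root(2,3)] .
  from a show ?thesis
  proof (cases rule: dgens_cases)
    case (root x al) then show ?thesis using dbr_xD_xD_mideal[OF root(2,3)] \<open>isroot be\<close> \<open>y \<in> rootsp be\<close> \<open>b = xD y\<close> by simp
  next
    case (h m) then show ?thesis
      using dbr_hx[OF h(2) root(2,3)] root(1) \<open>xD y \<in> \<mm>\<close>
      by (simp add: dv.subspace_neg[OF mideal_subspace] dv.subspace_scale[OF mideal_subspace])
  next
    case (k m) then show ?thesis
      using dbr_kx[OF k(2) root(2,3)] root(1) \<open>xD y \<in> \<mm>\<close> by (simp add: dv.subspace_scale[OF mideal_subspace])
  qed
next
  case (hk l)
  have hk_d: "h\<^sub>d l \<in> \<dd>" "k\<^sub>d l \<in> \<dd>" using hd_dset kd_dset hk(2) by auto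
  from a show ?thesis
  proof (cases rule: dgens_cases)
    case (root x al)
    have xd: "xD x \<in> \<dd>" by (rule xD_root_dset[OF root(2,3)])
    have "brd a b = - brd (h\<^sub>d l) (xD x) + - brd (k\<^sub>d l) (xD x)"
      unfolding root(1) hk(1) dbr_addr[OF xd hk_d] dbr_anti[OF xd hk_d(1)] dbr_anti[OF xd hk_d(2)] ..
    then show ?thesis
      unfolding dbr_hx[OF hk(2) root(2,3)] dbr_kx[OF hk(2) root(2,3)] using xD_mideal[OF root(2,3)]
      by (simp add: dv.subspace_neg[OF mideal_subspace] dv.subspace_scale[OF mideal_subspace]
          dv.subspace_add[OF mideal_subspace] dv.subspace_diff[OF mideal_subspace])
  next
    case (h m)
    then show ?thesis
      using dbr_addr[OF hd_dset[OF h(2)] hk_d] dbr_cartan[OF h(2) hk(2)] hk(1) dv.subspace_0[OF mideal_subspace] by simp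
  next
    case (k m)
    then show ?thesis
      using dbr_addr[OF kd_dset[OF k(2)] hk_d] dbr_cartan[OF k(2) hk(2)] hk(1) dv.subspace_0[OF mideal_subspace] by simp
  qed
qed

lemma mideal_ideal: "is_ideal \<dd> (dscale sc) brd \<mm>"
  unfolding is_ideal_def dis_subspace_eq
proof (intro conjI ballI)
  show "\<mm> \<subseteq> \<dd>" by (rule mideal_dset)
  show "dv.subspace \<mm>" by (rule mideal_subspace)
  fix v w assume v: "v \<in> \<dd>" and w: "w \<in> \<mm>"
  show "brd v w \<in> \<mm>"
    by (rule bilin_dset[where f=brd, OF mideal_subspace dv.vector_space_axioms dbr_addl dbr_addr dbr_scl
          dbr_scr dgens_dset mgens_dset dbr_dgens_mgens])
       (use dset_span v w in \<open>auto simp: \<mm>_def\<close>)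
qed

section \<open>The isomorphism \<open>\<mm> \<cong> \<gg>\<close>\<close>

lemma proj_hom_hk_xD:
  assumes l: "l \<in> \<hh>'" and a: "isroot a" "x \<in> rootsp a"
  shows "proj (brd (h\<^sub>d l + k\<^sub>d l) (xD x)) = br (proj (h\<^sub>d l + k\<^sub>d l)) (proj (xD x))"
proof -
  have "brd (h\<^sub>d l + k\<^sub>d l) (xD x) = brd (h\<^sub>d l) (xD x) + brd (k\<^sub>d l) (xD x)"
    by (rule dbr_addl[OF hd_dset[OF l] kd_dset[OF l] xD_root_dset[OF a]])
  \<comment> \<open>the \<open>\<Phi>\<close>-terms of \<open>\<Phi>\<^sub>- = \<Phi> - I\<close> and \<open>\<Phi>\<^sub>+ = \<Phi> + I\<close> cancel\<close>
  then have "proj (brd (h\<^sub>d l + k\<^sub>d l) (xD x))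
      = sc (- form (Phi_minus n C d u sc hh l) a) x + sc (form (Phi_plus n C d u sc hh l) a) x"
    unfolding dbr_hx[OF l a] dbr_kx[OF l a]
    by (simp add: proj_add proj_diff proj_scale proj_xD vs.scale_minus_left)
  also have "\<dots> = sc (l (h\<^sub>g a) + l (h\<^sub>g a)) x"
    by (simp add: hform_def Phi_minus_def Phi_plus_def flip: vs.scale_left_distrib)
  also have "\<dots> = sc (a (h\<^sub>g l) + a (h\<^sub>g l)) x" using hvec_sym[OF l root_hdual[OF a(1)]] by simp
  also have "\<dots> = br (h\<^sub>g l + h\<^sub>g l) x"
    using rootspace_br[OF hvec_hset[OF l] a(2)] by (simp only: br_addl vs.scale_left_distrib)
  finally show ?thesis by (simp add: proj_add proj_hd proj_kd proj_xD)
qed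

lemma proj_hom_cartan:
  assumes "l \<in> \<hh>'" "m \<in> \<hh>'" "a \<in> {h\<^sub>d l, k\<^sub>d l}" "b \<in> {h\<^sub>d m, k\<^sub>d m}"
  shows "proj (brd a b) = br (proj a) (proj b)"
proof -
  have "brd a b = 0" using assms dbr_cartan by auto
  moreover have "br (proj a) (proj b) = 0"
    using assms hset_abelian hvec_hset by (auto simp: proj_hd proj_kd)
  ultimately show ?thesis by (simp add: proj_0)
qed

lemma proj_hom_mgens: assumes a: "a \<in> mgens" and b: "b \<in> mgens" shows "proj (brd a b) = br (proj a) (proj b)"
  using a
proof (cases rule: mgens_cases)
  case (root x al)
  note a_root = root
  from b show ?thesis
  proof (cases rule: mgens_cases)
    case (root y be) then show ?thesis using proj_xD_xD[OF a_root(2,3) root(2,3)] a_root(1) by (simp add: proj_xD)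
  next
    case (hk l)
    have hk_d: "h\<^sub>d l + k\<^sub>d l \<in> \<dd>" using dset_add hd_dset kd_dset hk(2) by blast
    show ?thesis
      using proj_anti[OF hk_d xD_root_dset[OF a_root(2,3)] proj_hom_hk_xD[OF hk(2) a_root(2,3)]] a_root(1) hk(1)
      by simp
  qed
next
  case (hk l)
  note a_hk = hk
  from b show ?thesis
  proof (cases rule: mgens_cases)
    case (root y be) then show ?thesis using proj_hom_hk_xD[OF a_hk(2) root(2,3)] a_hk(1) by simp
  next
    case (hk m)
    have "brd a b = 0" using a_hk hk hd_dset kd_dset dbr_cartan by (simp add: dbr_addl dbr_addr dset_add)
    moreover have "br (proj a) (proj b) = 0" using a_hk hk
      by (simp add: proj_add proj_hd proj_kd hset_abelian hvec_hset vs.subspace_add[OF hset_subspace])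
    ultimately show ?thesis by (simp add: proj_0)
  qed
qed

lemma proj_hom_mideal: "v \<in> \<mm> \<Longrightarrow> w \<in> \<mm> \<Longrightarrow> proj (brd v w) = br (proj v) (proj w)"
  unfolding \<mm>_def by (rule proj_hom_of_generators[OF mgens_dset proj_hom_mgens])

lemma mideal_diagonal: "\<mm> \<subseteq> {(y, H, H) | y H. y \<in> \<nn> \<and> H \<in> \<hh>}"
  unfolding \<mm>_def
proof (rule dv.span_minimal)
  show "mgens \<subseteq> {(y, H, H) | y H. y \<in> \<nn> \<and> H \<in> \<hh>}"
    unfolding mgens_def using isroot_rootspace_nset hvec_hset vs.subspace_0[OF hset_subspace]
      vs.subspace_0[OF nset_subspace] by (auto simp: xD_def hd_plus_kd)
  show "dv.subspace {(y, H, H) | y H. y \<in> \<nn> \<and> H \<in> \<hh>}"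
  proof (rule dv.subspaceI)
    show "0 \<in> {(y, H, H) | y H. y \<in> \<nn> \<and> H \<in> \<hh>}"
      using vs.subspace_0[OF hset_subspace] vs.subspace_0[OF nset_subspace] by (auto simp: zero_prod_def)
    show "x + y \<in> {(y, H, H) | y H. y \<in> \<nn> \<and> H \<in> \<hh>}"
      if "x \<in> {(y, H, H) | y H. y \<in> \<nn> \<and> H \<in> \<hh>}" "y \<in> {(y, H, H) | y H. y \<in> \<nn> \<and> H \<in> \<hh>}" for x y
      using that vs.subspace_add[OF hset_subspace] vs.subspace_add[OF nset_subspace] by auto
    show "dscale sc c x \<in> {(y, H, H) | y H. y \<in> \<nn> \<and> H \<in> \<hh>}"
      if "x \<in> {(y, H, H) | y H. y \<in> \<nn> \<and> H \<in> \<hh>}" for c x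
      using that vs.subspace_scale[OF hset_subspace] vs.subspace_scale[OF nset_subspace] by (auto simp: dscale_def)
  qed
qed

lemma double_inj: fixes H H' :: 'g assumes "H + H = H' + H'" shows "H = H'"
proof -
  have "H = sc (1/2) (H + H)" by (simp add: vs.scale_right_distrib half_half)
  also have "\<dots> = H'" by (simp add: assms vs.scale_right_distrib half_half)
  finally show ?thesis .
qed

lemma proj_inj_mideal: "inj_on proj \<mm>"
proof (rule inj_onI)
  fix v w assume v: "v \<in> \<mm>" and w: "w \<in> \<mm>" and e: "proj v = proj w"
  obtain y H where y: "v = (y, H, H)" "y \<in> \<nn>" "H \<in> \<hh>" using mideal_diagonal v by blast
  obtain y' H' where y': "w = (y', H', H')" "y' \<in> \<nn>" "H' \<in> \<hh>" using mideal_diagonal w by blast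
  have e': "y + H + H = y' + H' + H'" using e y y' by (simp add: proj_triple)
  then have "y - y' = (H' + H') - (H + H)" by (simp add: algebra_simps)
  moreover have "y - y' \<in> \<nn>" using y(2) y'(2) nset_subspace vs.subspace_diff by blast
  moreover have "(H' + H') - (H + H) \<in> \<hh>" using y(3) y'(3) hset_subspace vs.subspace_diff vs.subspace_add by metis
  ultimately have "y = y'" using nset_hset_zero by fastforce
  then have "H + H = H' + H'" using e' by (simp add: add.assoc)
  then have "H = H'" by (rule double_inj)
  then show "v = w" using y y' \<open>y = y'\<close> by simp
qed

lemma proj_surj_mideal: "proj ` \<mm> = UNIV"
proof -
  have "z \<in> proj ` \<mm>" for z
  proof -
    obtain y H where yH: "y \<in> \<nn>" "H \<in> \<hh>" "z = y + H" by (rule g_decompose)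
    have "xD ` rootvecs \<subseteq> mgens" unfolding mgens_def rootvecs_def using roots_isroot by blast
    then have "xD y \<in> \<mm>" using xD_nset_span[OF yH(1)] dv.span_mono unfolding \<mm>_def by blast
    moreover have "(0, sc (1/2) H, sc (1/2) H) \<in> \<mm>"
      using diag_hset_mideal vs.subspace_scale[OF hset_subspace yH(2)] by blast
    ultimately have "xD y + (0, sc (1/2) H, sc (1/2) H) \<in> \<mm>" using mideal_subspace dv.subspace_add by blast
    moreover have "proj (xD y + (0, sc (1/2) H, sc (1/2) H)) = z"
      using yH(3) by (simp add: proj_add proj_xD proj_triple half_half add.assoc)
    ultimately show ?thesis by (metis image_eqI)
  qed
  then show ?thesis by blast
qed

lemma mideal_iso: "lie_iso \<mm> (+) (dscale sc) brd UNIV (+) sc br proj"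
  unfolding lie_iso_def bij_betw_def
  using proj_inj_mideal proj_surj_mideal proj_add proj_hom_mideal proj_scale by blast

section \<open>The case \<open>u = 0\<close>\<close>

lemma proj_hom_cartan_xD:
  assumes u0: "\<forall>i<n. \<forall>j<n. u i j = 0" and l: "l \<in> \<hh>'" and a: "isroot a" "x \<in> rootsp a"
  shows "proj (brd (h\<^sub>d l) (xD x)) = br (proj (h\<^sub>d l)) (proj (xD x))"
    and "proj (brd (k\<^sub>d l) (xD x)) = br (proj (k\<^sub>d l)) (proj (xD x))"
proof -
  have P: "Phi n C d u sc hh l = (\<lambda>_. 0)" by (rule Phi_zero_if_u_zero[OF u0])
  have act: "sc (l (h\<^sub>g a)) x = br (h\<^sub>g l) x"
    using rootspace_br[OF hvec_hset[OF l] a(2)] hvec_sym[OF l root_hdual[OF a(1)]] by simp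
  show "proj (brd (h\<^sub>d l) (xD x)) = br (proj (h\<^sub>d l)) (proj (xD x))"
    unfolding dbr_hx[OF l a] using act by (simp add: P form_Phi_minus_if_Phi_zero proj_scale proj_xD proj_hd)
  show "proj (brd (k\<^sub>d l) (xD x)) = br (proj (k\<^sub>d l)) (proj (xD x))"
    unfolding dbr_kx[OF l a] using act by (simp add: P form_Phi_plus_if_Phi_zero proj_scale proj_xD proj_kd)
qed

lemma proj_hom_dgens:
  assumes u0: "\<forall>i<n. \<forall>j<n. u i j = 0" and a: "a \<in> dgens" and b: "b \<in> dgens"
  shows "proj (brd a b) = br (proj a) (proj b)"
  using a
proof (cases rule: dgens_cases)
  case (root x al)
  note a_root = root
  have xd: "xD x \<in> \<dd>" by (rule xD_root_dset[OF root(2,3)])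
  from b show ?thesis
  proof (cases rule: dgens_cases)
    case (root y be) then show ?thesis using proj_xD_xD[OF a_root(2,3) root(2,3)] a_root(1) by (simp add: proj_xD)
  next
    case (h l) then show ?thesis
      using proj_anti[OF hd_dset[OF h(2)] xd proj_hom_cartan_xD(1)[OF u0 h(2) a_root(2,3)]] a_root(1) by simp
  next
    case (k l) then show ?thesis
      using proj_anti[OF kd_dset[OF k(2)] xd proj_hom_cartan_xD(2)[OF u0 k(2) a_root(2,3)]] a_root(1) by simp
  qed
next
  case (h l)
  from b show ?thesis
    by (cases rule: dgens_cases) (use h proj_hom_cartan_xD(1)[OF u0 h(2)] proj_hom_cartan[OF h(2)] in auto)
next
  case (k l)
  from b show ?thesis
    by (cases rule: dgens_cases) (use k proj_hom_cartan_xD(2)[OF u0 k(2)] proj_hom_cartan[OF k(2)] in auto)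
qed

lemma proj_hom_dset:
  assumes u0: "\<forall>i<n. \<forall>j<n. u i j = 0" and "v \<in> \<dd>" "w \<in> \<dd>"
  shows "proj (brd v w) = br (proj v) (proj w)"
  using proj_hom_of_generators[OF dgens_dset proj_hom_dgens[OF u0]] dset_span assms(2,3) by blast

lemma proj_lideal: assumes "w \<in> \<ll>" shows "proj w = 0"
proof -
  have "\<ll> \<subseteq> {v. proj v = 0}" unfolding \<ll>_def
  proof (rule dv.span_minimal)
    show "lgens \<subseteq> {v. proj v = 0}" unfolding lgens_def by (auto simp: proj_diff proj_hd proj_kd)
    show "dv.subspace {v. proj v = 0}" by (rule module_hom.subspace_kernel[OF proj_module_hom])
  qed
  then show ?thesis using assms by blast
qed

lemma ker_proj_lideal:
  assumes u0: "\<forall>i<n. \<forall>j<n. u i j = 0" and v: "v \<in> \<dd>" and p: "proj v = 0" shows "v \<in> \<ll>"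
proof -
  obtain y H K where v': "v = (y, H, K)" "y \<in> \<nn>" "H \<in> \<hh>" "K \<in> \<hh>" using v by (auto simp: dset_eq)
  have "y + (H + K) = 0" using p v' by (simp add: proj_triple add.assoc)
  then have e: "y = - (H + K)" by (simp only: eq_neg_iff_add_eq_0)
  moreover have "- (H + K) \<in> \<hh>" using v' hset_subspace vs.subspace_add vs.subspace_neg by blast
  ultimately have y0: "y = 0" using nset_hset_zero[OF v'(2)] by simp
  then have K: "K = - H" using e by (simp add: eq_neg_iff_add_eq_0 add.commute)
  obtain l where l: "l \<in> \<hh>'" "h\<^sub>g l = H" using hvec_surj[OF v'(3)] by blast
  \<comment> \<open>for \<open>u = 0\<close> the radical of \<open>u\<close> is all of \<open>\<hh>\<^sup>*\<close>\<close>
  have "l \<in> rad_u n u sc hh" unfolding rad_u_def using l u0 by (simp add: uform_def)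
  then have "h\<^sub>d l - k\<^sub>d l \<in> \<ll>" unfolding \<ll>_def lgens_def by (intro dv.span_base) blast
  moreover have "h\<^sub>d l - k\<^sub>d l = v" using v' y0 K l by (simp add: hD_def kD_def)
  ultimately show ?thesis by simp
qed

lemma proj_surj_dset: "proj ` \<dd> = UNIV"
proof -
  have "z \<in> proj ` \<dd>" for z
  proof -
    obtain y H where yH: "y \<in> \<nn>" "H \<in> \<hh>" "z = y + H" by (rule g_decompose)
    have "(y, H, 0) \<in> \<dd>" using yH vs.subspace_0[OF hset_subspace] by (simp add: dset_eq)
    moreover have "proj (y, H, 0) = z" using yH by (simp add: proj_triple)
    ultimately show ?thesis by (metis image_eqI)
  qed
  then show ?thesis by blast
qed

lemma ideal_dset: "is_ideal \<dd> (dscale sc) brd J \<Longrightarrow> J \<subseteq> \<dd>" unfolding is_ideal_def by blast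
lemma ideal_subspace: "is_ideal \<dd> (dscale sc) brd J \<Longrightarrow> dv.subspace J"
  unfolding is_ideal_def dis_subspace_eq by blast
lemma ideal_br: "is_ideal \<dd> (dscale sc) brd J \<Longrightarrow> x \<in> \<dd> \<Longrightarrow> y \<in> J \<Longrightarrow> brd x y \<in> J"
  unfolding is_ideal_def by blast

section \<open>Quotients of \<open>\<dd>\<close>\<close>

lemma coset_mem: "x \<in> coset J a \<longleftrightarrow> (\<exists>i\<in>J. x = a + i)" unfolding coset_def by blast

context
  fixes J assumes J: "dv.subspace J"
begin

lemma coset_self: "a \<in> coset J a"
  unfolding coset_mem using dv.subspace_0[OF J] by force

lemma coset_eq: assumes "a - b \<in> J" shows "coset J a = coset J b"
proof -
  have "x \<in> coset J b" if x: "x \<in> coset J a" and ab: "a - b \<in> J" for a b x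
  proof -
    obtain i where "i \<in> J" "x = a + i" using x unfolding coset_mem by blast
    then have "x = b + ((a - b) + i)" "(a - b) + i \<in> J" using ab dv.subspace_add[OF J] by auto
    then show ?thesis unfolding coset_mem by blast
  qed
  moreover have "b - a \<in> J" using dv.subspace_neg[OF J assms] by simp
  ultimately show ?thesis using assms by blast
qed

lemma quot_add_coset: "quot_add J (coset J a) (coset J b) = coset J (a + b)"
proof
  show "quot_add J (coset J a) (coset J b) \<subseteq> coset J (a + b)"
  proof
    fix x assume "x \<in> quot_add J (coset J a) (coset J b)"
    then obtain i1 i2 i where "i1 \<in> J" "i2 \<in> J" "i \<in> J" "x = (a + i1) + (b + i2) + i"
      unfolding quot_add_def coset_mem by blast
    then have "x = (a + b) + (i1 + i2 + i)" "i1 + i2 + i \<in> J"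
      using dv.subspace_add[OF J] by (auto simp: algebra_simps)
    then show "x \<in> coset J (a + b)" unfolding coset_mem by blast
  qed
  show "coset J (a + b) \<subseteq> quot_add J (coset J a) (coset J b)"
  proof
    fix x assume "x \<in> coset J (a + b)"
    then obtain i where "i \<in> J" "x = a + b + i" unfolding coset_mem by blast
    then show "x \<in> quot_add J (coset J a) (coset J b)" unfolding quot_add_def using coset_self by blast
  qed
qed

lemma quot_scale_coset: "quot_scale (dscale sc) J c (coset J a) = coset J (dscale sc c a)"
proof
  show "quot_scale (dscale sc) J c (coset J a) \<subseteq> coset J (dscale sc c a)"
  proof
    fix x assume "x \<in> quot_scale (dscale sc) J c (coset J a)"
    then obtain i1 i where "i1 \<in> J" "i \<in> J" "x = dscale sc c (a + i1) + i"
      unfolding quot_scale_def coset_mem by blast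
    then have "x = dscale sc c a + (dscale sc c i1 + i)" "dscale sc c i1 + i \<in> J"
      using dv.subspace_add[OF J] dv.subspace_scale[OF J] by (auto simp: dv.scale_right_distrib algebra_simps)
    then show "x \<in> coset J (dscale sc c a)" unfolding coset_mem by blast
  qed
  show "coset J (dscale sc c a) \<subseteq> quot_scale (dscale sc) J c (coset J a)"
  proof
    fix x assume "x \<in> coset J (dscale sc c a)"
    then obtain i where "i \<in> J" "x = dscale sc c a + i" unfolding coset_mem by blast
    then show "x \<in> quot_scale (dscale sc) J c (coset J a)" unfolding quot_scale_def using coset_self by blast
  qed
qed

end

lemma quot_br_coset:
  assumes J: "is_ideal \<dd> (dscale sc) brd J" and a: "a \<in> \<dd>" and b: "b \<in> \<dd>"
  shows "quot_br brd J (coset J a) (coset J b) = coset J (brd a b)"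
proof
  have JS: "dv.subspace J" and JD: "J \<subseteq> \<dd>" using ideal_subspace[OF J] ideal_dset[OF J] by auto
  show "quot_br brd J (coset J a) (coset J b) \<subseteq> coset J (brd a b)"
  proof
    fix x assume "x \<in> quot_br brd J (coset J a) (coset J b)"
    then obtain i1 i2 i where i: "i1 \<in> J" "i2 \<in> J" "i \<in> J" "x = brd (a + i1) (b + i2) + i"
      unfolding quot_br_def coset_mem by blast
    then have D: "i1 \<in> \<dd>" "i2 \<in> \<dd>" using JD by auto
    have "brd i1 b = - brd b i1" by (rule dbr_anti[OF D(1) b])
    then have "brd a i2 + brd i1 b + brd i1 i2 + i \<in> J"
      using ideal_br[OF J] a b D i JS dv.subspace_add dv.subspace_neg by metis
    moreover have "x = brd a b + (brd a i2 + brd i1 b + brd i1 i2 + i)"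
      using a b D i(4) by (simp add: dbr_addl dbr_addr dset_add algebra_simps)
    ultimately show "x \<in> coset J (brd a b)" unfolding coset_mem by blast
  qed
  show "coset J (brd a b) \<subseteq> quot_br brd J (coset J a) (coset J b)"
  proof
    fix x assume "x \<in> coset J (brd a b)"
    then obtain i where "i \<in> J" "x = brd a b + i" unfolding coset_mem by blast
    then show "x \<in> quot_br brd J (coset J a) (coset J b)" unfolding quot_br_def using coset_self[OF JS] by blast
  qed
qed

definition quot_proj :: "('g \<times> 'g \<times> 'g) set \<Rightarrow> 'g" where "quot_proj A = proj (SOME a. a \<in> A)"

lemma quot_proj_coset: "quot_proj (coset \<ll> a) = proj a"
proof -
  have "(SOME x. x \<in> coset \<ll> a) \<in> coset \<ll> a" using coset_self[OF lideal_subspace] by (rule someI)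
  then obtain i where "i \<in> \<ll>" "(SOME x. x \<in> coset \<ll> a) = a + i" unfolding coset_mem by blast
  then show ?thesis unfolding quot_proj_def using proj_lideal by (simp add: proj_add)
qed

lemma quot_carrier_elim:
  assumes "A \<in> quot_carrier \<dd> \<ll>" obtains a where "a \<in> \<dd>" "A = coset \<ll> a"
  using assms unfolding quot_carrier_def by blast

lemma quot_proj_inj:
  assumes u0: "\<forall>i<n. \<forall>j<n. u i j = 0" shows "inj_on quot_proj (quot_carrier \<dd> \<ll>)"
proof (rule inj_onI)
  fix A B assume "A \<in> quot_carrier \<dd> \<ll>" "B \<in> quot_carrier \<dd> \<ll>" and e: "quot_proj A = quot_proj B"
  then obtain a b where ab: "a \<in> \<dd>" "b \<in> \<dd>" "A = coset \<ll> a" "B = coset \<ll> b"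
    by (metis quot_carrier_elim)
  have "proj (a - b) = 0" using e ab by (simp add: quot_proj_coset proj_diff)
  then have "a - b \<in> \<ll>" using ker_proj_lideal[OF u0 dset_diff[OF ab(1,2)]] by simp
  then show "A = B" using ab coset_eq[OF lideal_subspace] by simp
qed

lemma quot_proj_surj: "quot_proj ` quot_carrier \<dd> \<ll> = UNIV"
proof -
  have "z \<in> quot_proj ` quot_carrier \<dd> \<ll>" for z
  proof -
    obtain v where v: "v \<in> \<dd>" "z = proj v" using proj_surj_dset by (metis UNIV_I imageE)
    have "coset \<ll> v \<in> quot_carrier \<dd> \<ll>" unfolding quot_carrier_def using v(1) by blast
    then show ?thesis by (rule rev_image_eqI) (simp add: quot_proj_coset v(2))
  qed
  then show ?thesis by blast
qed

lemma quotient_iso: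
  assumes u0: "\<forall>i<n. \<forall>j<n. u i j = 0"
  shows "lie_iso (quot_carrier \<dd> \<ll>) (quot_add \<ll>) (quot_scale (dscale sc) \<ll>) (quot_br brd \<ll>)
           UNIV (+) sc br quot_proj"
  unfolding lie_iso_def bij_betw_def
proof (intro conjI ballI allI quot_proj_inj[OF u0] quot_proj_surj)
  fix A B assume "A \<in> quot_carrier \<dd> \<ll>" "B \<in> quot_carrier \<dd> \<ll>"
  then obtain a b where ab: "a \<in> \<dd>" "b \<in> \<dd>" "A = coset \<ll> a" "B = coset \<ll> b"
    by (metis quot_carrier_elim)
  show "quot_proj (quot_add \<ll> A B) = quot_proj A + quot_proj B"
    unfolding ab quot_add_coset[OF lideal_subspace] quot_proj_coset proj_add ..
  show "quot_proj (quot_br brd \<ll> A B) = br (quot_proj A) (quot_proj B)"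
    unfolding ab quot_br_coset[OF lideal_ideal ab(1,2)] quot_proj_coset proj_hom_dset[OF u0 ab(1,2)] ..
next
  fix c A assume "A \<in> quot_carrier \<dd> \<ll>"
  then obtain a where "a \<in> \<dd>" "A = coset \<ll> a" by (rule quot_carrier_elim)
  then show "quot_proj (quot_scale (dscale sc) \<ll> c A) = sc c (quot_proj A)"
    by (simp add: quot_scale_coset[OF lideal_subspace] quot_proj_coset proj_scale)
qed

section \<open>\<open>\<ll>\<close> is the maximal solvable ideal when \<open>u = 0\<close>\<close>

lemma simple_ideals: "is_ideal UNIV sc br I \<Longrightarrow> I = {0} \<or> I = UNIV"
  using simple[unfolded simple_lie_def, THEN conjunct2, THEN conjunct2] by blast

lemma derived_UNIV: "derived sc br UNIV k = UNIV"
proof (induction k)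
  case 0 then show ?case by simp
next
  case (Suc k)
  define W where "W = vs.span {br x y | x y. x \<in> (UNIV::'g set) \<and> y \<in> (UNIV::'g set)}"
  have "is_ideal UNIV sc br W"
    unfolding is_ideal_def is_subspace_eq W_def by (auto intro: vs.span_base)
  moreover have "W \<noteq> {0}"
  proof
    assume "W = {0}"
    obtain x y where "br x y \<noteq> 0" using br_nontrivial by blast
    moreover have "br x y \<in> W" unfolding W_def by (rule vs.span_base) blast
    ultimately show False using \<open>W = {0}\<close> by simp
  qed
  ultimately have "W = UNIV" using simple_ideals by blast
  then show ?case using Suc by (simp add: lin_span_eq W_def)
qed

lemma derived_subset: assumes J: "is_ideal \<dd> (dscale sc) brd J" shows "derived (dscale sc) brd J k \<subseteq> J"
proof (induction k)
  case 0 then show ?case by simp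
next
  case (Suc k)
  have "{brd x y | x y. x \<in> derived (dscale sc) brd J k \<and> y \<in> derived (dscale sc) brd J k} \<subseteq> J"
    using Suc ideal_dset[OF J] ideal_br[OF J] by blast
  then show ?case by (simp add: dlin_span_eq dv.span_minimal ideal_subspace[OF J])
qed

lemma derived_proj: assumes u0: "\<forall>i<n. \<forall>j<n. u i j = 0" and J: "is_ideal \<dd> (dscale sc) brd J"
  shows "derived sc br (proj ` J) k \<subseteq> proj ` derived (dscale sc) brd J k"
proof (induction k)
  case 0 then show ?case by simp
next
  case (Suc k)
  let ?D1 = "derived sc br (proj ` J) k"
  let ?D2 = "derived (dscale sc) brd J k"
  have D2: "?D2 \<subseteq> \<dd>" using derived_subset[OF J] ideal_dset[OF J] by blast
  have "{br x y | x y. x \<in> ?D1 \<and> y \<in> ?D1} \<subseteq> proj ` {brd a b | a b. a \<in> ?D2 \<and> b \<in> ?D2}"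
  proof
    fix z assume "z \<in> {br x y | x y. x \<in> ?D1 \<and> y \<in> ?D1}"
    then obtain x y where xy: "z = br x y" "x \<in> ?D1" "y \<in> ?D1" by blast
    then obtain a b where ab: "a \<in> ?D2" "b \<in> ?D2" "x = proj a" "y = proj b" using Suc by blast
    have aD: "a \<in> \<dd>" "b \<in> \<dd>" using ab D2 by auto
    have "z = proj (brd a b)" using proj_hom_dset[OF u0 aD] xy(1) ab(3,4) by simp
    then show "z \<in> proj ` {brd a b | a b. a \<in> ?D2 \<and> b \<in> ?D2}" using ab by blast
  qed
  then have "vs.span {br x y | x y. x \<in> ?D1 \<and> y \<in> ?D1} \<subseteq> vs.span (proj ` {brd a b | a b. a \<in> ?D2 \<and> b \<in> ?D2})"
    by (rule vs.span_mono)
  also have "\<dots> = proj ` dv.span {brd a b | a b. a \<in> ?D2 \<and> b \<in> ?D2}"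
    by (rule module_hom.span_image[OF proj_module_hom])
  finally show ?case by (simp add: lin_span_eq dlin_span_eq)
qed

lemma proj_image_ideal:
  assumes u0: "\<forall>i<n. \<forall>j<n. u i j = 0" and J: "is_ideal \<dd> (dscale sc) brd J"
  shows "is_ideal UNIV sc br (proj ` J)"
  unfolding is_ideal_def is_subspace_eq
proof (intro conjI ballI)
  show "proj ` J \<subseteq> UNIV" by simp
  show "vs.subspace (proj ` J)" by (rule module_hom.subspace_image[OF proj_module_hom ideal_subspace[OF J]])
  fix x y assume "y \<in> proj ` J"
  then obtain j where j: "j \<in> J" "y = proj j" by blast
  obtain v where v: "v \<in> \<dd>" "x = proj v" using proj_surj_dset by (metis UNIV_I imageE)
  have "j \<in> \<dd>" using ideal_dset[OF J] j(1) by blast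
  then have "br x y = proj (brd v j)" using proj_hom_dset[OF u0 v(1)] v(2) j(2) by simp
  moreover have "brd v j \<in> J" using ideal_br[OF J v(1) j(1)] .
  ultimately show "br x y \<in> proj ` J" by blast
qed

lemma proj_image_solvable_ne_UNIV:
  assumes u0: "\<forall>i<n. \<forall>j<n. u i j = 0" and J: "is_ideal \<dd> (dscale sc) brd J"
    and sol: "solvable (dscale sc) brd J"
  shows "proj ` J \<noteq> UNIV"
proof
  assume U: "proj ` J = UNIV"
  obtain k where k: "derived (dscale sc) brd J k = {0}" using sol unfolding solvable_def by blast
  have "(UNIV::'g set) \<subseteq> proj ` {0}" using derived_proj[OF u0 J, of k] U k derived_UNIV by simp
  then have "\<forall>z::'g. z = 0" using proj_0 by auto
  then show False using br_nontrivial by blast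
qed

lemma lideal_max_solvable:
  assumes u0: "\<forall>i<n. \<forall>j<n. u i j = 0" shows "max_solvable_ideal \<dd> (dscale sc) brd \<ll>"
  unfolding max_solvable_ideal_def
proof (intro conjI allI impI lideal_ideal lideal_solvable)
  fix J assume "is_ideal \<dd> (dscale sc) brd J \<and> solvable (dscale sc) brd J"
  then have J: "is_ideal \<dd> (dscale sc) brd J" and sol: "solvable (dscale sc) brd J" by auto
  have "proj ` J = {0}"
    using simple_ideals[OF proj_image_ideal[OF u0 J]] proj_image_solvable_ne_UNIV[OF u0 J sol] by blast
  then show "J \<subseteq> \<ll>" using ker_proj_lideal[OF u0] ideal_dset[OF J] by blast
qed

end

theorem mainTheorem1:
  fixes n :: nat and C :: "nat \<Rightarrow> nat \<Rightarrow> int" and d :: "nat \<Rightarrow> nat"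
    and u :: "nat \<Rightarrow> nat \<Rightarrow> complex"
    and sc :: "complex \<Rightarrow> 'g::ab_group_add \<Rightarrow> 'g" and br :: "'g \<Rightarrow> 'g \<Rightarrow> 'g"
    and hh xp xm :: "nat \<Rightarrow> 'g"
    and brd :: "'g \<times> 'g \<times> 'g \<Rightarrow> 'g \<times> 'g \<times> 'g \<Rightarrow> 'g \<times> 'g \<times> 'g"
  assumes cartan: "gcm_finite_type_sym n C d"
    and vs: "vector_space sc"
    and findim: "\<exists>B. finite B \<and> lin_span sc B = UNIV"
    and simple: "simple_lie sc br"
    and gens: "chevalley_serre n C sc br hh xp xm"
    and u_skew: "\<forall>i<n. \<forall>j<n. u i j = - u j i"
    and brd: "d_bracket n C d u sc br hh brd"
  defines "D \<equiv> dset n C sc br hh"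
    and "l \<equiv> lin_span (dscale sc)
               {hD n C d sc hh lam - kD n C d sc hh lam | lam. lam \<in> rad_u n u sc hh}"
    and "m \<equiv> lin_span (dscale sc)
               ({xD x | x \<alpha>. is_root n sc br hh \<alpha> \<and> x \<in> rootspace n sc br hh \<alpha>}
                \<union> {hD n C d sc hh lam + kD n C d sc hh lam | lam. lam \<in> hdual n sc hh})"
  shows "(is_ideal D (dscale sc) brd l \<and> solvable (dscale sc) brd l)
       \<and> ((\<forall>i<n. \<forall>j<n. u i j = 0) \<longrightarrow>
            max_solvable_ideal D (dscale sc) brd l
          \<and> (\<exists>f. lie_iso (quot_carrier D l) (quot_add l) (quot_scale (dscale sc) l) (quot_br brd l)
                         UNIV (+) sc br f))
       \<and> is_ideal D (dscale sc) brd m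
       \<and> (\<exists>f. lie_iso m (+) (dscale sc) brd UNIV (+) sc br f)"
proof -
  interpret lie_double sc n C d u br hh xp xm brd
    by (rule lie_double.intro[OF vs]) (rule lie_double_axioms.intro; fact)
  have l_eq: "l = \<ll>" unfolding l_def \<ll>_def lgens_def dlin_span_eq ..
  have m_eq: "m = \<mm>" unfolding m_def \<mm>_def mgens_def dlin_span_eq ..
  have D_eq: "D = \<dd>" unfolding D_def ..
  show ?thesis unfolding l_eq m_eq D_eq
    using lideal_ideal lideal_solvable lideal_max_solvable quotient_iso mideal_ideal mideal_iso by blast
qed

end
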